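(* Let $\Sigma$ be a signed graph. Write $X_\Sigma$ as a polynomial with rational coefficients in the elements of $\{\xi_n : n\ge 1\}\cup\{q_{a,b}: a,b\ge 1\}\cup\{z\}$. Then for every $k\ge0$, the number of acyclic orientations of $\Sigma$ with exactly $k$ sinks equals the sum of the coefficients of those monomials for which the sum of the indices $n$ of its $\xi_n$ factors (counted with multiplicity) equals $k$.
   Context: A signed graph $\Sigma$ is a finite graph (loops and multiple edges allowed) together with a sign function $\mathrm{sgn}:E(\Sigma)\to\{+,-\}$; write $e:uv$ if $e$ has endpoints $u,v$ ($u=v$ for a loop). A coloring is a map $\kappa:V(\Sigma)\to\mathbb{Z}$; it is proper if $\kappa(u)\neq \mathrm{sgn}(e)\kappa(v)$ for every edge $e:uv$. The chromatic $B$-symmetric function is $X_\Sigma=\sum_{\kappa\text{ proper}}\prod_{v\in V(\Sigma)}x_{\kappa(v)}$, a formal power series in commuting variables $x_i$, $i\in\mathbb{Z}$. An orientation of $\Sigma$ assigns to each incidence of an edge with an endpoint (each half-edge; a loop has two) an arrow pointing toward or away from that vertex, such that on a positive edge exactly one of the two arrows points toward its vertex, and on a negative edge the two arrows either both point toward their vertices or both point away. A cycle is a closed walk such that, considering only the edges of the walk, every vertex of the walk has at least one arrow pointing into it and at least one pointing out of it; an orientation is acyclic if it has no cycle. A sink is a vertex all of whose incident arrows point toward it (an isolated vertex is a sink). Notation: $p_{a,b}=\sum_{i\in\mathbb{Z}}x_i^a x_{-i}^b$; $q_{a,b}=(-1)^{a+b+1}p_{a,b}$; $z=-x_0$; $\xi_n=\sum_{a=1}^n\binom{n}{a}p_{a,0}$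 for $n\ge1$ (equivalently $p_{n,0}=\sum_{i=1}^n\binom{n}{i}(-1)^{n-i}\xi_i$). *)

theory Defs
  imports Complex_Main "HOL-Library.Poly_Mapping" "HOL-Library.FuncSet"
begin

text \<open>A monomial in the variables x_i (i :: int) is a finitely supported exponent
  vector; a formal power series is its coefficient function.\<close>

type_synonym mon = "int \<Rightarrow>\<^sub>0 nat"
type_synonym ser = "mon \<Rightarrow> rat"

definition ser_one :: ser where
  "ser_one m = (if m = 0 then 1 else 0)"

definition ser_mult :: "ser \<Rightarrow> ser \<Rightarrow> ser" where
  "ser_mult f g m = (\<Sum>q \<in> {q. fst q + snd q = m}. f (fst q) * g (snd q))"

definition ser_pow :: "ser \<Rightarrow> nat \<Rightarrow> ser" where
  "ser_pow f n = (ser_mult f ^^ n) ser_one"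

text \<open>p_{a,b} = sum over i in Z of x_i^a x_{-i}^b (coefficientwise).\<close>
definition p_ser :: "nat \<Rightarrow> nat \<Rightarrow> ser" where
  "p_ser a b m = of_nat (card {i::int. Poly_Mapping.single i a + Poly_Mapping.single (-i) b = m})"

datatype gen = Xi nat | Q nat nat | Z

fun valid_gen :: "gen \<Rightarrow> bool" where
  "valid_gen (Xi n) = (1 \<le> n)"
| "valid_gen (Q a b) = (1 \<le> a \<and> 1 \<le> b)"
| "valid_gen Z = True"

fun gen_ser :: "gen \<Rightarrow> ser" where
  "gen_ser (Xi n) = (\<lambda>m. \<Sum>a=1..n. of_nat (n choose a) * p_ser a 0 m)"
| "gen_ser (Q a b) = (\<lambda>m. (-1) ^ (a + b + 1) * p_ser a b m)"
| "gen_ser Z = (\<lambda>m. if m = Poly_Mapping.single 0 1 then -1 else 0)"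

definition ser_monom :: "(gen \<Rightarrow> ser) \<Rightarrow> (gen \<Rightarrow>\<^sub>0 nat) \<Rightarrow> ser" where
  "ser_monom \<sigma> \<mu> =
     Finite_Set.fold (\<lambda>g acc. ser_mult (ser_pow (\<sigma> g) (Poly_Mapping.lookup \<mu> g)) acc) ser_one (Poly_Mapping.keys \<mu>)"

definition poly_eval :: "((gen \<Rightarrow>\<^sub>0 nat) \<Rightarrow>\<^sub>0 rat) \<Rightarrow> ser" where
  "poly_eval P m = (\<Sum>\<mu> \<in> Poly_Mapping.keys P. Poly_Mapping.lookup P \<mu> * ser_monom gen_ser \<mu> m)"

fun xi_index :: "gen \<Rightarrow> nat" where
  "xi_index (Xi n) = n"
| "xi_index (Q a b) = 0"
| "xi_index Z = 0"

definition xi_deg :: "(gen \<Rightarrow>\<^sub>0 nat) \<Rightarrow> nat" where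
  "xi_deg \<mu> = (\<Sum>g \<in> Poly_Mapping.keys \<mu>. xi_index g * Poly_Mapping.lookup \<mu> g)"

text \<open>A signed graph: vertex set V, edge set E, endpoints ends e (unordered; a loop
  has equal endpoints), sign sg e (True = positive).  Half-edges are pairs (e, s),
  s :: bool; (e, True) is at fst (ends e), (e, False) at snd (ends e).\<close>

definition endpoint :: "('e \<Rightarrow> 'v \<times> 'v) \<Rightarrow> 'e \<Rightarrow> bool \<Rightarrow> 'v" where
  "endpoint ends e s = (if s then fst (ends e) else snd (ends e))"

definition proper_coloring ::
  "'v set \<Rightarrow> 'e set \<Rightarrow> ('e \<Rightarrow> 'v \<times> 'v) \<Rightarrow> ('e \<Rightarrow> bool) \<Rightarrow> ('v \<Rightarrow> int) \<Rightarrow> bool" where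
  "proper_coloring V E ends sg \<kappa> \<longleftrightarrow>
     (\<forall>e\<in>E. \<kappa> (fst (ends e)) \<noteq> (if sg e then 1 else -1) * \<kappa> (snd (ends e)))"

definition chromB :: "'v set \<Rightarrow> 'e set \<Rightarrow> ('e \<Rightarrow> 'v \<times> 'v) \<Rightarrow> ('e \<Rightarrow> bool) \<Rightarrow> ser" where
  "chromB V E ends sg m = of_nat (card {\<kappa> \<in> V \<rightarrow>\<^sub>E (UNIV :: int set).
      proper_coloring V E ends sg \<kappa> \<and> (\<forall>i. Poly_Mapping.lookup m i = card {v\<in>V. \<kappa> v = i})})"

text \<open>An orientation: tau (e, s) = True iff the arrow at half-edge (e, s) points toward
  its vertex.\<close>
definition orientations :: "'e set \<Rightarrow> ('e \<Rightarrow> bool) \<Rightarrow> ('e \<times> bool \<Rightarrow> bool) set" where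
  "orientations E sg = {\<tau> \<in> (E \<times> (UNIV :: bool set)) \<rightarrow>\<^sub>E (UNIV :: bool set).
      \<forall>e\<in>E. (\<tau> (e, True) \<noteq> \<tau> (e, False)) = sg e}"

definition has_cycle :: "'e set \<Rightarrow> ('e \<Rightarrow> 'v \<times> 'v) \<Rightarrow> ('e \<times> bool \<Rightarrow> bool) \<Rightarrow> bool" where
  "has_cycle E ends \<tau> \<longleftrightarrow>
     (\<exists>vs es. es \<noteq> [] \<and> length vs = Suc (length es) \<and> hd vs = last vs \<and> set es \<subseteq> E \<and>
        (\<forall>i<length es. {endpoint ends (es!i) True, endpoint ends (es!i) False} = {vs!i, vs!Suc i}) \<and>
        (\<forall>w\<in>set vs.
            (\<exists>e\<in>set es. \<exists>s. endpoint ends e s = w \<and> \<tau> (e, s)) \<and>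
            (\<exists>e\<in>set es. \<exists>s. endpoint ends e s = w \<and> \<not> \<tau> (e, s))))"

definition acyclic_orientation :: "'e set \<Rightarrow> ('e \<Rightarrow> 'v \<times> 'v) \<Rightarrow> ('e \<times> bool \<Rightarrow> bool) \<Rightarrow> bool" where
  "acyclic_orientation E ends \<tau> \<longleftrightarrow> \<not> has_cycle E ends \<tau>"

definition sinks :: "'v set \<Rightarrow> 'e set \<Rightarrow> ('e \<Rightarrow> 'v \<times> 'v) \<Rightarrow> ('e \<times> bool \<Rightarrow> bool) \<Rightarrow> 'v set" where
  "sinks V E ends \<tau> = {v\<in>V. \<forall>e\<in>E. \<forall>s. endpoint ends e s = v \<longrightarrow> \<tau> (e, s)}"

end

theory Submission
  imports Defs "HOL-Computational_Algebra.Polynomial"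
begin

text \<open>Specialize \<open>x\<^sub>1 = t - 1\<close>, \<open>x\<^sub>i = -1\<close> for \<open>i = 0\<close> and \<open>2 \<le> \<bar>i\<bar> \<le> n + 1\<close>, and all other
  variables to \<open>0\<close>. Then \<open>\<xi>\<^sub>j\<close>, \<open>q\<^sub>a\<^sub>,\<^sub>b\<close> and \<open>z\<close> become \<open>t\<^sup>j - 2 n - 2\<close>, \<open>-(2 n + 1)\<close> and \<open>1\<close>,
  while \<open>X\<^sub>\<Sigma>\<close> becomes a weighted count of the proper colourings with the colours
  \<open>0, 1, \<plusminus>2, \<dots>, \<plusminus>(n + 1)\<close>. Sorting these by the set of vertices coloured \<open>1\<close> and
  peeling off the colour classes \<open>\<plusminus>(n + 1)\<close> shows that both sides are polynomials in \<open>n\<close>,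
  so they also agree at \<open>n = -1\<close>. There the generators become \<open>t\<^sup>j\<close>, \<open>1\<close> and \<open>1\<close>, and a
  reciprocity theorem -- the number of acyclic orientations of the signed graph induced on \<open>Y\<close>
  is \<open>(-1)\<^bsup>|Y|\<^esup>\<close> times the colouring polynomial at \<open>-1\<close>, proved by inclusion-exclusion over
  sinks and sources -- turns \<open>X\<^sub>\<Sigma>\<close> into the sum of \<open>t\<^bsup>#sinks\<^esup>\<close> over all acyclic
  orientations. Comparing the coefficients of \<open>t\<^sup>k\<close> gives the theorem.\<close>

section \<open>Multiplication of series\<close>

lemma keys_add_nat:
  "Poly_Mapping.keys (a + b :: 'a \<Rightarrow>\<^sub>0 nat) = Poly_Mapping.keys a \<union> Poly_Mapping.keys b"
  by (auto simp: in_keys_iff lookup_add)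

lemma finite_pointwise_le:
  "finite {a :: 'a \<Rightarrow>\<^sub>0 nat. \<forall>i. Poly_Mapping.lookup a i \<le> Poly_Mapping.lookup m i}"
proof -
  define N where "N = (\<Sum>i\<in>Poly_Mapping.keys m. Poly_Mapping.lookup m i)"
  define B where "B = {f. \<forall>x. (x \<in> Poly_Mapping.keys m \<longrightarrow> f x \<in> {0..N})
                          \<and> (x \<notin> Poly_Mapping.keys m \<longrightarrow> f x = 0)}"
  have "finite B"
    unfolding B_def by (rule finite_set_of_finite_funs) auto
  moreover have "Poly_Mapping.lookup ` {a. \<forall>i. Poly_Mapping.lookup a i \<le> Poly_Mapping.lookup m i} \<subseteq> B"
  proof clarify
    fix a assume le: "\<forall>i. Poly_Mapping.lookup a i \<le> Poly_Mapping.lookup m i"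
    have "Poly_Mapping.lookup m x \<le> N" if "x \<in> Poly_Mapping.keys m" for x
      unfolding N_def using that by (intro member_le_sum) auto
    then show "Poly_Mapping.lookup a \<in> B"
      using le by (auto simp: B_def in_keys_iff intro: order.trans) (metis le_zero_eq)
  qed
  moreover have "inj_on Poly_Mapping.lookup X" for X :: "('a \<Rightarrow>\<^sub>0 nat) set"
    by (auto intro: inj_onI poly_mapping_eqI)
  ultimately show ?thesis
    using finite_imageD finite_subset by blast
qed

lemma finite_sum_decompositions: "finite {q :: mon \<times> mon. fst q + snd q = m}"
proof -
  have "q \<in> (\<lambda>a. (a, m - a)) ` {a. \<forall>i. Poly_Mapping.lookup a i \<le> Poly_Mapping.lookup m i}"
    if m: "fst q + snd q = m" for q
  proof -
    have "\<forall>i. Poly_Mapping.lookup (fst q) i \<le> Poly_Mapping.lookup m i"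
      using m[symmetric] by (simp add: lookup_add)
    moreover have "snd q = m - fst q"
      using m by (metis add_diff_cancel_left')
    ultimately show ?thesis
      by (intro image_eqI[of _ _ "fst q"]) (auto simp: prod_eq_iff)
  qed
  then have "{q. fst q + snd q = m} \<subseteq>
      (\<lambda>a. (a, m - a)) ` {a. \<forall>i. Poly_Mapping.lookup a i \<le> Poly_Mapping.lookup m i}"
    by blast
  then show ?thesis
    using finite_pointwise_le finite_subset by blast
qed

lemma ser_mult_comm: "ser_mult f g = ser_mult g f"
  unfolding ser_mult_def fun_eq_iff
  by (intro allI sum.reindex_bij_witness[where i=prod.swap and j=prod.swap])
     (auto simp: add.commute mult.commute)

lemma ser_mult_triple:
  "ser_mult (ser_mult f g) h m =
     (\<Sum>t\<in>{t. fst t + fst (snd t) + snd (snd t) = m}. f (fst t) * g (fst (snd t)) * h (snd (snd t)))"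
proof -
  have "ser_mult (ser_mult f g) h m =
      (\<Sum>q\<in>{q. fst q + snd q = m}. \<Sum>p\<in>{p. fst p + snd p = fst q}. f (fst p) * g (snd p) * h (snd q))"
    by (simp add: ser_mult_def sum_distrib_right)
  also have "\<dots> = (\<Sum>(q, p)\<in>Sigma {q. fst q + snd q = m} (\<lambda>q. {p. fst p + snd p = fst q}).
                      f (fst p) * g (snd p) * h (snd q))"
    by (subst sum.Sigma) (auto simp: finite_sum_decompositions)
  also have "\<dots> = (\<Sum>t\<in>{t. fst t + fst (snd t) + snd (snd t) = m}.
                      f (fst t) * g (fst (snd t)) * h (snd (snd t)))"
    by (rule sum.reindex_bij_witness[where i="\<lambda>(a, b, c). ((a + b, c), (a, b))"
          and j="\<lambda>(q, p). (fst p, snd p, snd q)"]) auto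
  finally show ?thesis .
qed

lemma ser_mult_assoc: "ser_mult (ser_mult f g) h = ser_mult f (ser_mult g h)"
proof
  fix m
  have "ser_mult f (ser_mult g h) m = ser_mult (ser_mult h g) f m"
    by (simp add: ser_mult_comm)
  also have "\<dots> = (\<Sum>t\<in>{t. fst t + fst (snd t) + snd (snd t) = m}.
                      f (fst t) * g (fst (snd t)) * h (snd (snd t)))"
    unfolding ser_mult_triple
    by (rule sum.reindex_bij_witness[where i="\<lambda>(a, b, c). (c, b, a)" and j="\<lambda>(a, b, c). (c, b, a)"])
       (auto simp: ac_simps)
  finally show "ser_mult (ser_mult f g) h m = ser_mult f (ser_mult g h) m"
    by (simp add: ser_mult_triple)
qed

lemma ser_mult_left_commute: "ser_mult a (ser_mult b c) = ser_mult b (ser_mult a c)"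
  by (metis ser_mult_assoc ser_mult_comm)

lemma comp_fun_commute_ser_mult: "comp_fun_commute (\<lambda>g acc. ser_mult (F g) acc)"
  by unfold_locales (auto simp: fun_eq_iff ser_mult_left_commute)

lemma fold_ser_mult_insert:
  assumes "finite A" "x \<notin> A"
  shows "Finite_Set.fold (\<lambda>g acc. ser_mult (F g) acc) ser_one (insert x A) =
         ser_mult (F x) (Finite_Set.fold (\<lambda>g acc. ser_mult (F g) acc) ser_one A)"
proof -
  interpret comp_fun_commute "\<lambda>g acc. ser_mult (F g) acc"
    by (rule comp_fun_commute_ser_mult)
  show ?thesis
    using assms by simp
qed

section \<open>Specializing finitely many variables\<close>

text \<open>\<open>specialize C val F\<close> is the value of \<open>F\<close> at \<open>x\<^sub>i = val i\<close> for \<open>i \<in> C\<close> and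
  \<open>x\<^sub>i = 0\<close> for \<open>i \<notin> C\<close>; it is a genuine evaluation when \<open>support_in C F\<close> is finite.\<close>

definition support_in :: "int set \<Rightarrow> ser \<Rightarrow> mon set" where
  "support_in C F = {m. Poly_Mapping.keys m \<subseteq> C \<and> F m \<noteq> 0}"

definition mon_value :: "int set \<Rightarrow> (int \<Rightarrow> rat) \<Rightarrow> mon \<Rightarrow> rat" where
  "mon_value C val m = (\<Prod>i\<in>C. val i ^ Poly_Mapping.lookup m i)"

definition specialize :: "int set \<Rightarrow> (int \<Rightarrow> rat) \<Rightarrow> ser \<Rightarrow> rat" where
  "specialize C val F = (\<Sum>m\<in>support_in C F. F m * mon_value C val m)"

lemma specialize_eq_sum:
  assumes "finite M" "support_in C F \<subseteq> M" "\<forall>m\<in>M. Poly_Mapping.keys m \<subseteq> C"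
  shows "specialize C val F = (\<Sum>m\<in>M. F m * mon_value C val m)"
  unfolding specialize_def
  by (rule sum.mono_neutral_left) (use assms in \<open>auto simp: support_in_def\<close>)

lemma mon_value_add:
  "finite C \<Longrightarrow> mon_value C val (a + b) = mon_value C val a * mon_value C val b"
  by (simp add: mon_value_def lookup_add power_add prod.distrib)

lemma mon_value_single:
  assumes "finite C" "i \<in> C"
  shows "mon_value C val (Poly_Mapping.single i a) = val i ^ a"
proof -
  have "mon_value C val (Poly_Mapping.single i a) = (\<Prod>j\<in>C. if i = j then val i ^ a else 1)"
    unfolding mon_value_def by (rule prod.cong) (auto simp: lookup_single when_def)
  then show ?thesis
    using assms by simp
qed

lemma specialize_ser_one: "specialize C val ser_one = 1"
proof -
  have "support_in C ser_one = {0}"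
    by (auto simp: support_in_def ser_one_def)
  then show ?thesis
    by (simp add: specialize_def ser_one_def mon_value_def)
qed

lemma finite_support_in_ser_one: "finite (support_in C ser_one)"
  by (rule finite_subset[of _ "{0}"]) (auto simp: support_in_def ser_one_def)

lemma ser_mult_eq_sum_support_in:
  assumes "Poly_Mapping.keys m \<subseteq> C"
  shows "ser_mult F G m =
    (\<Sum>q\<in>{q\<in>support_in C F \<times> support_in C G. fst q + snd q = m}. F (fst q) * G (snd q))"
  unfolding ser_mult_def
proof (rule sum.mono_neutral_right)
  show "\<forall>q\<in>{q. fst q + snd q = m} - {q\<in>support_in C F \<times> support_in C G. fst q + snd q = m}.
          F (fst q) * G (snd q) = 0"
    using assms by (auto simp: support_in_def keys_add_nat)
qed (auto simp: finite_sum_decompositions)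

lemma support_in_ser_mult:
  "support_in C (ser_mult F G) \<subseteq> (\<lambda>q. fst q + snd q) ` (support_in C F \<times> support_in C G)"
proof
  fix m assume m: "m \<in> support_in C (ser_mult F G)"
  then have km: "Poly_Mapping.keys m \<subseteq> C" and nz: "ser_mult F G m \<noteq> 0"
    by (auto simp: support_in_def)
  then have "(\<Sum>q\<in>{q\<in>support_in C F \<times> support_in C G. fst q + snd q = m}. F (fst q) * G (snd q)) \<noteq> 0"
    by (simp add: ser_mult_eq_sum_support_in[OF km])
  then obtain q where "q \<in> support_in C F \<times> support_in C G" "m = fst q + snd q"
    by (metis (mono_tags, lifting) mem_Collect_eq sum.not_neutral_contains_not_neutral)
  then show "m \<in> (\<lambda>q. fst q + snd q) ` (support_in C F \<times> support_in C G)"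
    by blast
qed

lemma finite_support_in_ser_mult:
  "finite (support_in C F) \<Longrightarrow> finite (support_in C G) \<Longrightarrow> finite (support_in C (ser_mult F G))"
  by (rule finite_subset[OF support_in_ser_mult]) simp

lemma specialize_ser_mult:
  assumes C: "finite C" and F: "finite (support_in C F)" and G: "finite (support_in C G)"
  shows "specialize C val (ser_mult F G) = specialize C val F * specialize C val G"
proof -
  let ?S = "support_in C F \<times> support_in C G"
  let ?M = "(\<lambda>q. fst q + snd q) ` ?S"
  have keys_M: "\<forall>m\<in>?M. Poly_Mapping.keys m \<subseteq> C"
    by (auto simp: keys_add_nat support_in_def)
  have "specialize C val (ser_mult F G) = (\<Sum>m\<in>?M. ser_mult F G m * mon_value C val m)"
    using F G keys_M by (intro specialize_eq_sum support_in_ser_mult) auto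
  also have "\<dots> = (\<Sum>m\<in>?M. \<Sum>q\<in>{q\<in>?S. fst q + snd q = m}.
                    F (fst q) * mon_value C val (fst q) * (G (snd q) * mon_value C val (snd q)))"
  proof (rule sum.cong[OF refl])
    fix m assume "m \<in> ?M"
    then have km: "Poly_Mapping.keys m \<subseteq> C"
      using keys_M by blast
    have "F (fst q) * G (snd q) * mon_value C val m =
        F (fst q) * mon_value C val (fst q) * (G (snd q) * mon_value C val (snd q))"
      if "q \<in> {q\<in>?S. fst q + snd q = m}" for q
      using that by (auto simp: mon_value_add[OF C] mult_ac)
    then show "ser_mult F G m * mon_value C val m = (\<Sum>q\<in>{q\<in>?S. fst q + snd q = m}.
        F (fst q) * mon_value C val (fst q) * (G (snd q) * mon_value C val (snd q)))"
      unfolding ser_mult_eq_sum_support_in[OF km] sum_distrib_right by (rule sum.cong[OF refl])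
  qed
  also have "\<dots> = (\<Sum>q\<in>?S. F (fst q) * mon_value C val (fst q) * (G (snd q) * mon_value C val (snd q)))"
    by (rule sum.group) (use F G in auto)
  also have "\<dots> = specialize C val F * specialize C val G"
    by (simp add: specialize_def sum_product sum.cartesian_product split_def)
  finally show ?thesis .
qed

lemma finite_support_in_ser_pow:
  "finite (support_in C F) \<Longrightarrow> finite (support_in C (ser_pow F n))"
  by (induction n) (simp_all add: ser_pow_def finite_support_in_ser_one finite_support_in_ser_mult)

lemma specialize_ser_pow:
  "finite C \<Longrightarrow> finite (support_in C F) \<Longrightarrow> specialize C val (ser_pow F n) = specialize C val F ^ n"
proof (induction n)
  case (Suc n)
  have "ser_pow F (Suc n) = ser_mult F (ser_pow F n)"
    by (simp add: ser_pow_def)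
  then show ?case
    using Suc by (simp add: specialize_ser_mult finite_support_in_ser_pow)
qed (simp add: ser_pow_def specialize_ser_one)

lemma specialize_fold_ser_mult:
  assumes "finite C" "finite A" "\<forall>g\<in>A. finite (support_in C (F g))"
  shows "finite (support_in C (Finite_Set.fold (\<lambda>g acc. ser_mult (F g) acc) ser_one A)) \<and>
    specialize C val (Finite_Set.fold (\<lambda>g acc. ser_mult (F g) acc) ser_one A) =
      (\<Prod>g\<in>A. specialize C val (F g))"
  using assms(2,3)
proof (induction A rule: finite_induct)
  case (insert x A)
  then show ?case
    by (simp add: fold_ser_mult_insert finite_support_in_ser_mult specialize_ser_mult[OF assms(1)])
qed (simp add: finite_support_in_ser_one specialize_ser_one)

lemma finite_support_in_ser_monom:
  assumes "finite C" "\<forall>g\<in>Poly_Mapping.keys \<mu>. finite (support_in C (\<sigma> g))"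
  shows "finite (support_in C (ser_monom \<sigma> \<mu>))"
  using specialize_fold_ser_mult[OF assms(1) finite_keys, of \<mu> "\<lambda>g. ser_pow (\<sigma> g) (Poly_Mapping.lookup \<mu> g)"]
    assms(2) finite_support_in_ser_pow
  unfolding ser_monom_def by blast

lemma specialize_ser_monom:
  assumes "finite C" "\<forall>g\<in>Poly_Mapping.keys \<mu>. finite (support_in C (\<sigma> g))"
  shows "specialize C val (ser_monom \<sigma> \<mu>) =
    (\<Prod>g\<in>Poly_Mapping.keys \<mu>. specialize C val (\<sigma> g) ^ Poly_Mapping.lookup \<mu> g)"
  using specialize_fold_ser_mult[OF assms(1) finite_keys, of \<mu> "\<lambda>g. ser_pow (\<sigma> g) (Poly_Mapping.lookup \<mu> g)"]
    assms finite_support_in_ser_pow specialize_ser_pow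
  unfolding ser_monom_def by simp

lemma support_in_sum: "support_in C (\<lambda>m. \<Sum>x\<in>K. F x m) \<subseteq> (\<Union>x\<in>K. support_in C (F x))"
  by (auto simp: support_in_def elim: sum.not_neutral_contains_not_neutral)

lemma finite_support_in_sum:
  "finite K \<Longrightarrow> \<forall>x\<in>K. finite (support_in C (F x)) \<Longrightarrow> finite (support_in C (\<lambda>m. \<Sum>x\<in>K. F x m))"
  by (rule finite_subset[OF support_in_sum]) auto

lemma specialize_sum:
  assumes K: "finite K" and fin: "\<forall>x\<in>K. finite (support_in C (F x))"
  shows "specialize C val (\<lambda>m. \<Sum>x\<in>K. F x m) = (\<Sum>x\<in>K. specialize C val (F x))"
proof -
  let ?M = "\<Union>x\<in>K. support_in C (F x)"
  have M: "finite ?M" "\<forall>m\<in>?M. Poly_Mapping.keys m \<subseteq> C"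
    using K fin by (auto simp: support_in_def)
  have "specialize C val (\<lambda>m. \<Sum>x\<in>K. F x m) = (\<Sum>m\<in>?M. (\<Sum>x\<in>K. F x m) * mon_value C val m)"
    by (rule specialize_eq_sum[OF M(1) support_in_sum M(2)])
  also have "\<dots> = (\<Sum>x\<in>K. \<Sum>m\<in>?M. F x m * mon_value C val m)"
    by (simp add: sum_distrib_right sum.swap[of _ ?M])
  also have "\<dots> = (\<Sum>x\<in>K. specialize C val (F x))"
    using M by (intro sum.cong refl specialize_eq_sum[symmetric]) auto
  finally show ?thesis .
qed

lemma support_in_scale: "support_in C (\<lambda>m. c * F m) \<subseteq> support_in C F"
  by (auto simp: support_in_def)

lemma finite_support_in_scale: "finite (support_in C F) \<Longrightarrow> finite (support_in C (\<lambda>m. c * F m))"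
  by (rule finite_subset[OF support_in_scale])

lemma specialize_scale: "specialize C val (\<lambda>m. c * F m) = c * specialize C val F"
proof (cases "c = 0")
  case False
  then have "support_in C (\<lambda>m. c * F m) = support_in C F"
    by (auto simp: support_in_def)
  then show ?thesis
    by (simp add: specialize_def sum_distrib_left mult.assoc)
qed (simp add: specialize_def support_in_def)

lemma support_in_p_ser:
  assumes "1 \<le> a"
  shows "support_in C (p_ser a b) \<subseteq>
    (\<lambda>i. Poly_Mapping.single i a + Poly_Mapping.single (-i) b) ` {i\<in>C. 0 < b \<longrightarrow> -i \<in> C}"
proof
  fix m assume "m \<in> support_in C (p_ser a b)"
  then have km: "Poly_Mapping.keys m \<subseteq> C"
    and "{i. Poly_Mapping.single i a + Poly_Mapping.single (-i) b = m} \<noteq> {}"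
    by (auto simp: support_in_def p_ser_def card_gt_0_iff)
  then obtain i where i: "m = Poly_Mapping.single i a + Poly_Mapping.single (-i) b"
    by auto
  moreover have "Poly_Mapping.keys m = insert i (if b = 0 then {} else {-i})"
    using assms by (simp add: i keys_add_nat)
  ultimately show "m \<in> (\<lambda>i. Poly_Mapping.single i a + Poly_Mapping.single (-i) b) ` {i\<in>C. 0 < b \<longrightarrow> -i \<in> C}"
    using km by (auto split: if_splits)
qed

lemma finite_support_in_p_ser: "finite C \<Longrightarrow> 1 \<le> a \<Longrightarrow> finite (support_in C (p_ser a b))"
  by (rule finite_subset[OF support_in_p_ser]) auto

lemma specialize_p_ser:
  assumes C: "finite C" and a: "1 \<le> a"
  shows "specialize C val (p_ser a b) = (\<Sum>i\<in>{i\<in>C. 0 < b \<longrightarrow> -i \<in> C}. val i ^ a * val (-i) ^ b)"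
proof -
  define \<phi> where "\<phi> i = Poly_Mapping.single i a + Poly_Mapping.single (-i) b" for i :: int
  define I where "I = {i\<in>C. 0 < b \<longrightarrow> -i \<in> C}"
  have keys_\<phi>: "Poly_Mapping.keys (\<phi> i) = insert i (if b = 0 then {} else {-i})" for i
    using a by (simp add: \<phi>_def keys_add_nat)
  have keys_\<phi>_in_C: "Poly_Mapping.keys (\<phi> i) \<subseteq> C \<longleftrightarrow> i \<in> I" for i
    by (auto simp: keys_\<phi> I_def)
  have "specialize C val (p_ser a b) = (\<Sum>m\<in>\<phi> ` I. p_ser a b m * mon_value C val m)"
  proof (rule specialize_eq_sum)
    show "support_in C (p_ser a b) \<subseteq> \<phi> ` I"
      using support_in_p_ser[OF a] by (simp add: \<phi>_def I_def)
  qed (use C keys_\<phi>_in_C in \<open>auto simp: I_def\<close>)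
  also have "\<dots> = (\<Sum>m\<in>\<phi> ` I. \<Sum>i\<in>{i\<in>I. \<phi> i = m}. mon_value C val (\<phi> i))"
  proof (rule sum.cong[OF refl])
    fix m assume "m \<in> \<phi> ` I"
    then have "Poly_Mapping.keys m \<subseteq> C"
      using keys_\<phi>_in_C by blast
    then have "{i. \<phi> i = m} = {i\<in>I. \<phi> i = m}"
      using keys_\<phi>_in_C by auto
    then have "p_ser a b m = of_nat (card {i\<in>I. \<phi> i = m})"
      by (simp add: p_ser_def \<phi>_def)
    then show "p_ser a b m * mon_value C val m = (\<Sum>i\<in>{i\<in>I. \<phi> i = m}. mon_value C val (\<phi> i))"
      by simp
  qed
  also have "\<dots> = (\<Sum>i\<in>I. mon_value C val (\<phi> i))"
    by (rule sum.group) (use C in \<open>auto simp: I_def\<close>)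
  also have "\<dots> = (\<Sum>i\<in>I. val i ^ a * val (-i) ^ b)"
  proof (rule sum.cong[OF refl])
    fix i assume i: "i \<in> I"
    show "mon_value C val (\<phi> i) = val i ^ a * val (-i) ^ b"
    proof (cases "b = 0")
      case True
      then show ?thesis
        using i by (simp add: \<phi>_def I_def mon_value_single[OF C])
    next
      case False
      then show ?thesis
        using i by (simp add: \<phi>_def I_def mon_value_add[OF C] mon_value_single[OF C])
    qed
  qed
  finally show ?thesis
    unfolding I_def .
qed

definition colour_content :: "'v set \<Rightarrow> ('v \<Rightarrow> int) \<Rightarrow> mon" where
  "colour_content V \<kappa> = Abs_poly_mapping (\<lambda>i. card {v\<in>V. \<kappa> v = i})"

lemma lookup_colour_content:
  assumes "finite V"
  shows "Poly_Mapping.lookup (colour_content V \<kappa>) i = card {v\<in>V. \<kappa> v = i}"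
proof -
  have "{i. card {v\<in>V. \<kappa> v = i} \<noteq> 0} \<subseteq> \<kappa> ` V"
    by (auto simp: card_eq_0_iff assms)
  then have "finite {i. card {v\<in>V. \<kappa> v = i} \<noteq> 0}"
    using assms finite_subset by blast
  then show ?thesis
    by (simp add: colour_content_def)
qed

lemma keys_colour_content: "finite V \<Longrightarrow> Poly_Mapping.keys (colour_content V \<kappa>) = \<kappa> ` V"
  by (auto simp: in_keys_iff lookup_colour_content card_eq_0_iff)

lemma chromB_eq_card_content:
  assumes "finite V"
  shows "chromB V E ends sg m = of_nat (card {\<kappa> \<in> V \<rightarrow>\<^sub>E UNIV.
           proper_coloring V E ends sg \<kappa> \<and> colour_content V \<kappa> = m})"
proof -
  have "(\<forall>i. Poly_Mapping.lookup m i = card {v\<in>V. \<kappa> v = i}) \<longleftrightarrow> colour_content V \<kappa> = m" for \<kappa>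
    by (auto simp: poly_mapping_eq_iff lookup_colour_content[OF assms] fun_eq_iff)
  then show ?thesis
    by (simp add: chromB_def)
qed

lemma mon_value_colour_content:
  assumes "finite V" "finite C" "\<kappa> ` V \<subseteq> C"
  shows "mon_value C val (colour_content V \<kappa>) = (\<Prod>v\<in>V. val (\<kappa> v))"
proof -
  have "(\<Prod>v\<in>V. val (\<kappa> v)) = (\<Prod>i\<in>C. \<Prod>v\<in>{v\<in>V. \<kappa> v = i}. val (\<kappa> v))"
    by (rule prod.group[symmetric]) (use assms in auto)
  also have "\<dots> = (\<Prod>i\<in>C. val i ^ card {v\<in>V. \<kappa> v = i})"
    by (rule prod.cong[OF refl]) simp
  finally show ?thesis
    by (simp add: mon_value_def lookup_colour_content[OF assms(1)])
qed

lemma specialize_chromB: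
  assumes V: "finite V" and C: "finite C"
  shows "specialize C val (chromB V E ends sg) =
    (\<Sum>\<kappa>\<in>{\<kappa> \<in> V \<rightarrow>\<^sub>E C. proper_coloring V E ends sg \<kappa>}. \<Prod>v\<in>V. val (\<kappa> v))"
proof -
  define K where "K = {\<kappa> \<in> V \<rightarrow>\<^sub>E C. proper_coloring V E ends sg \<kappa>}"
  have fin_K: "finite K"
    unfolding K_def using V C by (intro finite_subset[OF _ finite_PiE[OF V, of "\<lambda>_. C"]]) auto
  have K_iff: "\<kappa> \<in> K \<longleftrightarrow> \<kappa> \<in> V \<rightarrow>\<^sub>E UNIV \<and> proper_coloring V E ends sg \<kappa> \<and>
      Poly_Mapping.keys (colour_content V \<kappa>) \<subseteq> C" for \<kappa>
    by (auto simp: K_def keys_colour_content[OF V] PiE_def Pi_def)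
  have fibre: "{\<kappa> \<in> V \<rightarrow>\<^sub>E UNIV. proper_coloring V E ends sg \<kappa> \<and> colour_content V \<kappa> = m} =
      {\<kappa> \<in> K. colour_content V \<kappa> = m}" if "Poly_Mapping.keys m \<subseteq> C" for m
    using that K_iff by auto
  have "specialize C val (chromB V E ends sg) =
      (\<Sum>m\<in>colour_content V ` K. chromB V E ends sg m * mon_value C val m)"
  proof (rule specialize_eq_sum)
    show "support_in C (chromB V E ends sg) \<subseteq> colour_content V ` K"
      using K_iff by (auto simp: support_in_def chromB_eq_card_content[OF V] fibre card_gt_0_iff)
  qed (use fin_K K_iff in auto)
  also have "\<dots> = (\<Sum>m\<in>colour_content V ` K. \<Sum>\<kappa>\<in>{\<kappa> \<in> K. colour_content V \<kappa> = m}.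
                    mon_value C val (colour_content V \<kappa>))"
    using K_iff by (intro sum.cong refl) (auto simp: chromB_eq_card_content[OF V] fibre)
  also have "\<dots> = (\<Sum>\<kappa>\<in>K. mon_value C val (colour_content V \<kappa>))"
    by (rule sum.group) (use fin_K in auto)
  also have "\<dots> = (\<Sum>\<kappa>\<in>K. \<Prod>v\<in>V. val (\<kappa> v))"
    using V C by (intro sum.cong refl mon_value_colour_content) (auto simp: K_def)
  finally show ?thesis
    unfolding K_def .
qed

section \<open>The principal specialization\<close>

definition band :: "nat \<Rightarrow> int set" where
  "band n = {j. 2 \<le> \<bar>j\<bar> \<and> \<bar>j\<bar> \<le> int n + 1}"

definition palette :: "nat \<Rightarrow> int set" where
  "palette n = insert 1 (insert 0 (band n))"

definition colour_weight :: "rat \<Rightarrow> int \<Rightarrow> rat" where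
  "colour_weight t j = (if j = 1 then t - 1 else -1)"

text \<open>Under this specialization \<open>p\<^sub>a\<^sub>,\<^sub>0\<close> becomes \<open>(t - 1)\<^sup>a + (2 n + 1) (-1)\<^sup>a\<close> (note that
  \<open>-1 \<notin> palette n\<close>), which yields the following values of the generators as polynomials in
  \<open>x = n\<close>.\<close>

fun gen_value :: "rat \<Rightarrow> gen \<Rightarrow> rat \<Rightarrow> rat" where
  "gen_value t (Xi j) x = t ^ j - 2 * x - 2"
| "gen_value t (Q a b) x = - (2 * x + 1)"
| "gen_value t Z x = 1"

lemma finite_band: "finite (band n)"
  and card_band: "card (band n) = 2 * n"
proof -
  have eq: "band n = {-(int n + 1)..-2} \<union> {2..int n + 1}"
    by (auto simp: band_def)
  show "finite (band n)"
    by (simp add: eq)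
  have "card ({-(int n + 1)..-2} \<union> {2..int n + 1}) = card {-(int n + 1)..-2} + card {2..int n + 1}"
    by (rule card_Un_disjoint) auto
  then show "card (band n) = 2 * n"
    by (simp add: eq)
qed

lemma finite_palette: "finite (palette n)"
  by (simp add: palette_def finite_band)

lemma zero_notin_band: "0 \<notin> band n"
  and one_notin_band: "1 \<notin> band n"
  and minus_one_notin_band: "-1 \<notin> band n"
  and uminus_in_band_iff: "-i \<in> band n \<longleftrightarrow> i \<in> band n"
  by (auto simp: band_def)

lemma specialize_p_ser_0:
  assumes "1 \<le> a"
  shows "specialize (palette n) (colour_weight t) (p_ser a 0) = (t - 1) ^ a + (2 * of_nat n + 1) * (-1) ^ a"
proof -
  have "specialize (palette n) (colour_weight t) (p_ser a 0) = (\<Sum>i\<in>palette n. colour_weight t i ^ a)"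
    using specialize_p_ser[OF finite_palette assms] by simp
  also have "\<dots> = (t - 1) ^ a + ((-1) ^ a + (\<Sum>i\<in>band n. colour_weight t i ^ a))"
    using finite_band zero_notin_band one_notin_band by (simp add: palette_def colour_weight_def)
  also have "(\<Sum>i\<in>band n. colour_weight t i ^ a) = (\<Sum>i\<in>band n. (-1) ^ a)"
    by (rule sum.cong) (auto simp: colour_weight_def band_def)
  finally show ?thesis
    by (simp add: card_band algebra_simps)
qed

lemma specialize_p_ser_pos:
  assumes "1 \<le> a" "1 \<le> b"
  shows "specialize (palette n) (colour_weight t) (p_ser a b) = (2 * of_nat n + 1) * (-1) ^ (a + b)"
proof -
  have "{i\<in>palette n. 0 < b \<longrightarrow> -i \<in> palette n} = insert 0 (band n)"
    using assms by (auto simp: palette_def uminus_in_band_iff band_def)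
  moreover have "(\<Sum>i\<in>insert 0 (band n). colour_weight t i ^ a * colour_weight t (-i) ^ b) =
      (\<Sum>i\<in>insert 0 (band n). (-1) ^ (a + b))"
    by (rule sum.cong[OF refl]) (auto simp: colour_weight_def band_def power_add)
  ultimately show ?thesis
    using assms finite_band zero_notin_band
    by (simp add: specialize_p_ser finite_palette card_band algebra_simps)
qed

lemma finite_support_in_gen_ser:
  assumes "valid_gen g"
  shows "finite (support_in (palette n) (gen_ser g))"
proof (cases g)
  case (Xi j)
  have "\<forall>a\<in>{1..j}. finite (support_in (palette n) (\<lambda>m. of_nat (j choose a) * p_ser a 0 m))"
  proof
    fix a :: nat assume "a \<in> {1..j}"
    then show "finite (support_in (palette n) (\<lambda>m. of_nat (j choose a) * p_ser a 0 m))"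
      by (intro finite_support_in_scale finite_support_in_p_ser finite_palette) simp
  qed
  then show ?thesis
    unfolding Xi gen_ser.simps by (intro finite_support_in_sum finite_atLeastAtMost)
next
  case (Q a b)
  then have "1 \<le> a"
    using assms by simp
  then show ?thesis
    unfolding Q gen_ser.simps by (intro finite_support_in_scale finite_support_in_p_ser finite_palette)
next
  case Z
  have "support_in (palette n) (gen_ser Z) \<subseteq> {Poly_Mapping.single 0 1}"
    by (auto simp: support_in_def)
  then show ?thesis
    unfolding Z by (rule finite_subset) simp
qed

lemma specialize_gen_ser:
  assumes "valid_gen g"
  shows "specialize (palette n) (colour_weight t) (gen_ser g) = gen_value t g (of_nat n)"
proof (cases g)
  case (Xi j)
  then have j: "1 \<le> j"
    using assms by simp
  have "specialize (palette n) (colour_weight t) (gen_ser g) =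
      (\<Sum>a=1..j. of_nat (j choose a) * ((t - 1) ^ a + (2 * of_nat n + 1) * (-1) ^ a))"
    by (simp add: Xi specialize_sum finite_support_in_scale finite_support_in_p_ser finite_palette
        specialize_scale specialize_p_ser_0)
  also have "\<dots> = (\<Sum>a\<le>j. of_nat (j choose a) * ((t - 1) ^ a + (2 * of_nat n + 1) * (-1) ^ a))
                   - (2 * of_nat n + 2)"
    by (simp add: atMost_atLeast0 sum.atLeast_Suc_atMost[of 0 j] Suc_le_eq j)
  also have "\<dots> = (\<Sum>a\<le>j. of_nat (j choose a) * (t - 1) ^ a)
      + (2 * of_nat n + 1) * (\<Sum>a\<le>j. of_nat (j choose a) * (-1) ^ a) - (2 * of_nat n + 2)"
    by (simp add: sum.distrib sum_distrib_left algebra_simps)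
  also have "\<dots> = ((t - 1) + 1) ^ j + (2 * of_nat n + 1) * ((-1) + 1) ^ j - (2 * of_nat n + 2)"
    using binomial_ring[of "t - 1" 1 j] binomial_ring[of "-1 :: rat" 1 j] by simp
  finally show ?thesis
    using j by (simp add: Xi)
next
  case (Q a b)
  then have "specialize (palette n) (colour_weight t) (gen_ser g) =
      (-1) ^ (a + b + 1) * ((2 * of_nat n + 1) * (-1) ^ (a + b))"
    using assms by (simp only: gen_ser.simps specialize_scale specialize_p_ser_pos valid_gen.simps)
  then show ?thesis
    by (simp add: Q power_add algebra_simps)
next
  case Z
  have "support_in (palette n) (gen_ser Z) = {Poly_Mapping.single 0 1}"
    by (auto simp: support_in_def palette_def)
  moreover have "mon_value (palette n) (colour_weight t) (Poly_Mapping.single 0 1) = -1"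
    using mon_value_single[OF finite_palette, of 0 n] by (simp add: palette_def colour_weight_def)
  ultimately show ?thesis
    by (simp add: Z specialize_def)
qed

lemma specialize_poly_eval:
  assumes valid: "\<forall>\<mu>\<in>Poly_Mapping.keys P. \<forall>g\<in>Poly_Mapping.keys \<mu>. valid_gen g"
  shows "specialize (palette n) (colour_weight t) (poly_eval P) =
    (\<Sum>\<mu>\<in>Poly_Mapping.keys P. Poly_Mapping.lookup P \<mu> *
       (\<Prod>g\<in>Poly_Mapping.keys \<mu>. gen_value t g (of_nat n) ^ Poly_Mapping.lookup \<mu> g))"
proof -
  have fin: "\<forall>g\<in>Poly_Mapping.keys \<mu>. finite (support_in (palette n) (gen_ser g))"
    if "\<mu> \<in> Poly_Mapping.keys P" for \<mu>
    using valid that finite_support_in_gen_ser by blast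
  have "poly_eval P = (\<lambda>m. \<Sum>\<mu>\<in>Poly_Mapping.keys P. Poly_Mapping.lookup P \<mu> * ser_monom gen_ser \<mu> m)"
    by (simp add: poly_eval_def fun_eq_iff)
  then show ?thesis
    using fin valid
    by (simp add: specialize_sum finite_support_in_scale finite_support_in_ser_monom finite_palette
        specialize_scale specialize_ser_monom specialize_gen_ser)
qed

section \<open>Counting proper colourings\<close>

lemma sum_Suc_choose:
  fixes a :: "nat \<Rightarrow> 'a::comm_semiring_1"
  shows "(\<Sum>j\<le>M. of_nat (Suc n choose j) * a j) =
    (\<Sum>j\<le>M. of_nat (n choose j) * a j) + (\<Sum>j<M. of_nat (n choose j) * a (Suc j))"
  by (induction M) (simp_all add: algebra_simps)

lemma gbinomial_minus_one: "(-1 :: 'a::field_char_0) gchoose j = (-1) ^ j"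
proof -
  have "(-1 :: 'a) gchoose j = (-1) ^ j * ((1 + of_nat j - 1) gchoose j)"
    by (rule gbinomial_minus)
  also have "(1 + of_nat j - 1 :: 'a) gchoose j = 1"
    using binomial_gbinomial[of j j, where 'a='a] by simp
  finally show ?thesis
    by simp
qed

lemma card_eq_sum_card_fibres:
  assumes "finite A" "finite B" "f ` A \<subseteq> B"
  shows "card A = (\<Sum>b\<in>B. card {a\<in>A. f a = b})"
  using sum.group[OF assms, of "\<lambda>_. 1 :: nat"] by simp

lemma glued_edge_proper_iff:
  fixes \<kappa> :: "'v \<Rightarrow> int"
  assumes TU: "T \<inter> U = {}" and c: "c \<noteq> 0"
    and \<kappa>: "\<forall>v\<in>T. \<kappa> v = c" "\<forall>v\<in>U. \<kappa> v = -c" "\<forall>v\<in>Y - T - U. \<kappa> v \<noteq> c \<and> \<kappa> v \<noteq> -c"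
    and ab: "a \<in> Y" "b \<in> Y" "a \<in> T \<union> U \<or> b \<in> T \<union> U"
  shows "\<kappa> a \<noteq> (if s then 1 else -1) * \<kappa> b \<longleftrightarrow>
    (a \<in> T \<union> U \<and> b \<in> T \<union> U \<longrightarrow> (s \<longleftrightarrow> (a \<in> T) \<noteq> (b \<in> T)))"
proof -
  have cls: "(v \<in> T \<and> \<kappa> v = c) \<or> (v \<in> U \<and> \<kappa> v = -c) \<or> (v \<notin> T \<union> U \<and> \<kappa> v \<noteq> c \<and> \<kappa> v \<noteq> -c)"
    if "v \<in> Y" for v
    using that \<kappa> by blast
  have "a \<notin> T \<or> a \<notin> U" "b \<notin> T \<or> b \<notin> U"
    using TU by auto
  then show ?thesis
    using cls[OF ab(1)] cls[OF ab(2)] ab(3) c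
    by (elim disjE conjE; cases s; simp)
qed

locale signed_graph =
  fixes V :: "'v set" and E :: "'e set" and ends :: "'e \<Rightarrow> 'v \<times> 'v" and sg :: "'e \<Rightarrow> bool"
  assumes finite_V: "finite V" and finite_E: "finite E"
    and ends_in_V: "\<forall>e\<in>E. fst (ends e) \<in> V \<and> snd (ends e) \<in> V"
begin

definition induced_edges :: "'v set \<Rightarrow> 'e set" where
  "induced_edges Y = {e\<in>E. fst (ends e) \<in> Y \<and> snd (ends e) \<in> Y}"

definition proper_colourings :: "'v set \<Rightarrow> int set \<Rightarrow> ('v \<Rightarrow> int) set" where
  "proper_colourings Y D = {\<kappa> \<in> Y \<rightarrow>\<^sub>E D. proper_coloring Y (induced_edges Y) ends sg \<kappa>}"

text \<open>For \<open>c \<noteq> 0\<close>, \<open>compatible T U\<close> says that colouring \<open>T\<close> with \<open>c\<close> and \<open>U\<close> with \<open>-c\<close> is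
  proper on the edges inside \<open>T \<union> U\<close>, and equally that the vertices of \<open>T\<close> can be sinks
  and those of \<open>U\<close> sources of one orientation of these edges.\<close>

definition compatible :: "'v set \<Rightarrow> 'v set \<Rightarrow> bool" where
  "compatible T U \<longleftrightarrow> (\<forall>e\<in>E. fst (ends e) \<in> T \<union> U \<and> snd (ends e) \<in> T \<union> U \<longrightarrow>
      (sg e \<longleftrightarrow> (fst (ends e) \<in> T) \<noteq> (snd (ends e) \<in> T)))"

definition compatible_pairs :: "'v set \<Rightarrow> ('v set \<times> 'v set) set" where
  "compatible_pairs Y = {(T, U). T \<subseteq> Y \<and> U \<subseteq> Y \<and> T \<inter> U = {} \<and> compatible T U}"

lemma mem_compatible_pairs:
  "p \<in> compatible_pairs Y \<longleftrightarrow> fst p \<subseteq> Y \<and> snd p \<subseteq> Y \<and> fst p \<inter> snd p = {} \<and> compatible (fst p) (snd p)"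
  by (auto simp: compatible_pairs_def)

lemma finite_compatible_pairs: "finite Y \<Longrightarrow> finite (compatible_pairs Y)"
  by (rule finite_subset[of _ "Pow Y \<times> Pow Y"]) (auto simp: mem_compatible_pairs)

lemma empty_in_compatible_pairs: "({}, {}) \<in> compatible_pairs Y"
  by (simp add: compatible_pairs_def compatible_def)

lemma induced_edges_mono: "Y \<subseteq> W \<Longrightarrow> induced_edges Y \<subseteq> induced_edges W"
  by (auto simp: induced_edges_def)

lemma induced_edges_V: "induced_edges V = E"
  using ends_in_V by (auto simp: induced_edges_def)

lemma finite_proper_colourings: "finite Y \<Longrightarrow> finite D \<Longrightarrow> finite (proper_colourings Y D)"
  unfolding proper_colourings_def by (rule finite_subset[OF _ finite_PiE]) auto

lemma proper_coloring_glue: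
  assumes TU: "T \<union> U \<subseteq> Y" "T \<inter> U = {}" and c: "c \<noteq> 0"
    and \<kappa>: "\<forall>v\<in>T. \<kappa> v = c" "\<forall>v\<in>U. \<kappa> v = -c" "\<forall>v\<in>Y - T - U. \<kappa> v \<noteq> c \<and> \<kappa> v \<noteq> -c"
  shows "proper_coloring Y (induced_edges Y) ends sg \<kappa> \<longleftrightarrow>
    compatible T U \<and> proper_coloring (Y - T - U) (induced_edges (Y - T - U)) ends sg \<kappa>"
proof -
  note edge = glued_edge_proper_iff[OF TU(2) c \<kappa>]
  have inner: "induced_edges (Y - T - U) =
      {e \<in> induced_edges Y. fst (ends e) \<notin> T \<union> U \<and> snd (ends e) \<notin> T \<union> U}"
    by (auto simp: induced_edges_def)
  have outer: "e \<in> induced_edges Y"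
    if "e \<in> E" "fst (ends e) \<in> T \<union> U" "snd (ends e) \<in> T \<union> U" for e
    using that TU by (auto simp: induced_edges_def)
  show ?thesis
  proof
    assume proper: "proper_coloring Y (induced_edges Y) ends sg \<kappa>"
    have "compatible T U"
      unfolding compatible_def
    proof (intro ballI impI)
      fix e assume "e \<in> E" and ends: "fst (ends e) \<in> T \<union> U \<and> snd (ends e) \<in> T \<union> U"
      then have "e \<in> induced_edges Y"
        using outer by blast
      then have "\<kappa> (fst (ends e)) \<noteq> (if sg e then 1 else -1) * \<kappa> (snd (ends e))"
        using proper by (simp add: proper_coloring_def)
      then show "sg e \<longleftrightarrow> (fst (ends e) \<in> T) \<noteq> (snd (ends e) \<in> T)"
        using edge[of "fst (ends e)" "snd (ends e)" "sg e"] ends TU by auto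
    qed
    moreover have "proper_coloring (Y - T - U) (induced_edges (Y - T - U)) ends sg \<kappa>"
      using proper inner by (auto simp: proper_coloring_def)
    ultimately show "compatible T U \<and> proper_coloring (Y - T - U) (induced_edges (Y - T - U)) ends sg \<kappa>"
      by blast
  next
    assume H: "compatible T U \<and> proper_coloring (Y - T - U) (induced_edges (Y - T - U)) ends sg \<kappa>"
    show "proper_coloring Y (induced_edges Y) ends sg \<kappa>"
      unfolding proper_coloring_def
    proof
      fix e assume e: "e \<in> induced_edges Y"
      show "\<kappa> (fst (ends e)) \<noteq> (if sg e then 1 else -1) * \<kappa> (snd (ends e))"
      proof (cases "fst (ends e) \<in> T \<union> U \<or> snd (ends e) \<in> T \<union> U")
        case True
        then show ?thesis
          using e H edge[of "fst (ends e)" "snd (ends e)" "sg e"]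
          by (auto simp: induced_edges_def compatible_def)
      next
        case False
        then have "e \<in> induced_edges (Y - T - U)"
          using e inner by auto
        then show ?thesis
          using H by (simp add: proper_coloring_def)
      qed
    qed
  qed
qed

lemma proper_coloring_cong:
  "\<forall>v\<in>Y. \<kappa> v = \<kappa>' v \<Longrightarrow>
    proper_coloring Y (induced_edges Y) ends sg \<kappa> \<longleftrightarrow> proper_coloring Y (induced_edges Y) ends sg \<kappa>'"
  by (simp add: proper_coloring_def induced_edges_def)

definition colour_fibre :: "'v set \<Rightarrow> int set \<Rightarrow> int \<Rightarrow> 'v set \<Rightarrow> 'v set \<Rightarrow> ('v \<Rightarrow> int) set" where
  "colour_fibre Y D c T U = {\<kappa> \<in> proper_colourings Y (insert c (insert (-c) D)).
     {v\<in>Y. \<kappa> v = c} = T \<and> {v\<in>Y. \<kappa> v = -c} = U}"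

lemma proper_coloring_fibre_iff:
  assumes "T \<union> U \<subseteq> Y" "T \<inter> U = {}" "c \<noteq> 0" "{v\<in>Y. \<kappa> v = c} = T" "{v\<in>Y. \<kappa> v = -c} = U"
  shows "proper_coloring Y (induced_edges Y) ends sg \<kappa> \<longleftrightarrow>
    compatible T U \<and> proper_coloring (Y - T - U) (induced_edges (Y - T - U)) ends sg \<kappa>"
  by (rule proper_coloring_glue[OF assms(1-3)]) (use assms(4,5) in auto)

lemma colour_fibre_incompatible:
  assumes "T \<union> U \<subseteq> Y" "T \<inter> U = {}" "c \<noteq> 0" "\<not> compatible T U"
  shows "colour_fibre Y D c T U = {}"
  using proper_coloring_fibre_iff[OF assms(1-3)] assms(4)
  by (auto simp: colour_fibre_def proper_colourings_def)

lemma bij_betw_restrict_colour_fibre: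
  assumes TU: "T \<union> U \<subseteq> Y" "T \<inter> U = {}" and c: "c \<noteq> 0" "c \<notin> D" "-c \<notin> D"
    and compat: "compatible T U"
  shows "bij_betw (\<lambda>\<kappa>. restrict \<kappa> (Y - T - U)) (colour_fibre Y D c T U) (proper_colourings (Y - T - U) D)"
proof -
  define extend where
    "extend \<rho> = (\<lambda>v. if v \<in> T then c else if v \<in> U then -c else \<rho> v)" for \<rho> :: "'v \<Rightarrow> int"
  note fibre_iff = proper_coloring_fibre_iff[OF TU c(1)]
  show ?thesis
  proof (rule bij_betw_byWitness[where f'=extend])
    show "\<forall>\<kappa>\<in>colour_fibre Y D c T U. extend (restrict \<kappa> (Y - T - U)) = \<kappa>"
    proof
      fix \<kappa> assume "\<kappa> \<in> colour_fibre Y D c T U"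
      then have "\<kappa> \<in> Y \<rightarrow>\<^sub>E insert c (insert (-c) D)" "{v\<in>Y. \<kappa> v = c} = T" "{v\<in>Y. \<kappa> v = -c} = U"
        by (auto simp: colour_fibre_def proper_colourings_def)
      then show "extend (restrict \<kappa> (Y - T - U)) = \<kappa>"
        using TU by (fastforce simp: extend_def fun_eq_iff PiE_def extensional_def)
    qed
    show "\<forall>\<rho>\<in>proper_colourings (Y - T - U) D. restrict (extend \<rho>) (Y - T - U) = \<rho>"
      by (auto simp: extend_def proper_colourings_def PiE_def extensional_def fun_eq_iff)
    show "(\<lambda>\<kappa>. restrict \<kappa> (Y - T - U)) ` colour_fibre Y D c T U \<subseteq> proper_colourings (Y - T - U) D"
    proof clarify
      fix \<kappa> assume "\<kappa> \<in> colour_fibre Y D c T U"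
      then have \<kappa>: "\<kappa> \<in> Y \<rightarrow>\<^sub>E insert c (insert (-c) D)" "{v\<in>Y. \<kappa> v = c} = T" "{v\<in>Y. \<kappa> v = -c} = U"
        and "proper_coloring (Y - T - U) (induced_edges (Y - T - U)) ends sg \<kappa>"
        using fibre_iff by (auto simp: colour_fibre_def proper_colourings_def)
      moreover have "restrict \<kappa> (Y - T - U) \<in> (Y - T - U) \<rightarrow>\<^sub>E D"
        using \<kappa> by (auto simp: PiE_def Pi_def)
      ultimately show "restrict \<kappa> (Y - T - U) \<in> proper_colourings (Y - T - U) D"
        by (simp add: proper_colourings_def proper_coloring_cong[of _ "restrict \<kappa> _" \<kappa>])
    qed
    show "extend ` proper_colourings (Y - T - U) D \<subseteq> colour_fibre Y D c T U"
    proof clarify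
      fix \<rho> assume "\<rho> \<in> proper_colourings (Y - T - U) D"
      then have \<rho>: "\<rho> \<in> (Y - T - U) \<rightarrow>\<^sub>E D" "proper_coloring (Y - T - U) (induced_edges (Y - T - U)) ends sg \<rho>"
        by (auto simp: proper_colourings_def)
      have ext: "extend \<rho> \<in> Y \<rightarrow>\<^sub>E insert c (insert (-c) D)"
        using \<rho>(1) TU by (auto simp: extend_def PiE_def Pi_def extensional_def)
      have cls: "{v\<in>Y. extend \<rho> v = c} = T" "{v\<in>Y. extend \<rho> v = -c} = U"
        using \<rho>(1) TU c by (auto simp: extend_def PiE_def Pi_def)
      have "proper_coloring (Y - T - U) (induced_edges (Y - T - U)) ends sg (extend \<rho>)"
        using \<rho>(2) proper_coloring_cong[of "Y - T - U" "extend \<rho>" \<rho>] by (simp add: extend_def)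
      then show "extend \<rho> \<in> colour_fibre Y D c T U"
        using ext cls fibre_iff[OF cls] compat by (simp add: colour_fibre_def proper_colourings_def)
    qed
  qed
qed

lemma card_colour_fibre:
  assumes "T \<union> U \<subseteq> Y" "T \<inter> U = {}" "c \<noteq> 0" "c \<notin> D" "-c \<notin> D"
  shows "card (colour_fibre Y D c T U) = (if compatible T U then card (proper_colourings (Y - T - U) D) else 0)"
  using bij_betw_same_card[OF bij_betw_restrict_colour_fibre[OF assms]] colour_fibre_incompatible[OF assms(1-3)]
  by auto

lemma card_proper_colourings_Suc:
  assumes Y: "finite Y"
  shows "card (proper_colourings Y (insert 0 (band (Suc n)))) =
    (\<Sum>p\<in>compatible_pairs Y. card (proper_colourings (Y - fst p - snd p) (insert 0 (band n))))"
proof -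
  define c where "c = int n + 2"
  define D where "D = insert 0 (band n)"
  define A where "A = proper_colourings Y (insert c (insert (-c) D))"
  define P where "P = {p. fst p \<subseteq> Y \<and> snd p \<subseteq> Y \<and> fst p \<inter> snd p = {}}"
  have palette: "insert 0 (band (Suc n)) = insert c (insert (-c) D)"
    by (auto simp: band_def c_def D_def)
  have c: "c \<noteq> 0" "c \<notin> D" "-c \<notin> D"
    by (auto simp: band_def c_def D_def)
  have "finite A"
    using Y finite_band by (simp add: A_def D_def finite_proper_colourings)
  moreover have "finite P"
    unfolding P_def by (rule finite_subset[of _ "Pow Y \<times> Pow Y"]) (use Y in auto)
  moreover have "(\<lambda>\<kappa>. ({v\<in>Y. \<kappa> v = c}, {v\<in>Y. \<kappa> v = -c})) ` A \<subseteq> P"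
    using c by (auto simp: P_def)
  ultimately have "card A = (\<Sum>p\<in>P. card {\<kappa>\<in>A. ({v\<in>Y. \<kappa> v = c}, {v\<in>Y. \<kappa> v = -c}) = p})"
    by (rule card_eq_sum_card_fibres)
  also have "\<dots> = (\<Sum>p\<in>P. if compatible (fst p) (snd p)
                         then card (proper_colourings (Y - fst p - snd p) D) else 0)"
    using c by (intro sum.cong refl)
       (auto simp: P_def A_def prod_eq_iff colour_fibre_def card_colour_fibre[symmetric])
  also have "\<dots> = (\<Sum>p\<in>compatible_pairs Y. card (proper_colourings (Y - fst p - snd p) D))"
  proof -
    have "compatible_pairs Y = {p\<in>P. compatible (fst p) (snd p)}"
      by (auto simp: P_def mem_compatible_pairs)
    then show ?thesis
      using \<open>finite P\<close> by (simp add: sum.inter_filter)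
  qed
  finally show ?thesis
    by (simp add: palette A_def D_def)
qed

lemma card_proper_colourings_0:
  "card (proper_colourings Y (insert 0 (band 0))) = (if induced_edges Y = {} then 1 else 0)"
proof -
  have "band 0 = {}"
    by (auto simp: band_def)
  then have "Y \<rightarrow>\<^sub>E insert 0 (band 0) = {\<lambda>v\<in>Y. 0}"
    by (auto simp: PiE_def Pi_def extensional_def fun_eq_iff)
  moreover have "proper_coloring Y (induced_edges Y) ends sg (\<lambda>v\<in>Y. 0) \<longleftrightarrow> induced_edges Y = {}"
    by (auto simp: proper_coloring_def induced_edges_def)
  ultimately have "proper_colourings Y (insert 0 (band 0)) =
      (if induced_edges Y = {} then {\<lambda>v\<in>Y. 0} else {})"
    by (auto simp: proper_colourings_def)
  then show ?thesis
    by simp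
qed

text \<open>Colourings using the colour pairs \<open>\<plusminus>2, \<dots>, \<plusminus>(n + 1)\<close> are counted by first choosing
  which \<open>j\<close> of these \<open>n\<close> pairs occur: \<open>peel_count j Y\<close> is the number of ways to remove \<open>j\<close>
  nonempty compatible pairs from \<open>Y\<close> in turn so that no edge is left.\<close>

fun peel_count :: "nat \<Rightarrow> 'v set \<Rightarrow> nat" where
  "peel_count 0 Y = (if induced_edges Y = {} then 1 else 0)"
| "peel_count (Suc j) Y = (\<Sum>p\<in>compatible_pairs Y - {({}, {})}. peel_count j (Y - fst p - snd p))"

lemma card_Diff_compatible_pair_less:
  assumes "finite Y" "p \<in> compatible_pairs Y - {({}, {})}"
  shows "card (Y - fst p - snd p) < card Y"
proof -
  have "Y - fst p - snd p \<subset> Y"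
    using assms(2) by (auto simp: mem_compatible_pairs prod_eq_iff)
  then show ?thesis
    using assms(1) by (simp add: psubset_card_mono)
qed

lemma peel_count_eq_0: "finite Y \<Longrightarrow> card Y < j \<Longrightarrow> peel_count j Y = 0"
proof (induction j arbitrary: Y)
  case (Suc j)
  have "peel_count j (Y - fst p - snd p) = 0" if "p \<in> compatible_pairs Y - {({}, {})}" for p
    using Suc.IH[of "Y - fst p - snd p"] card_Diff_compatible_pair_less[OF Suc.prems(1) that] Suc.prems
    by simp
  then show ?case
    by simp
qed simp

lemma card_proper_colourings_band:
  "finite Y \<Longrightarrow> card Y \<le> M \<Longrightarrow>
    card (proper_colourings Y (insert 0 (band n))) = (\<Sum>j\<le>M. (n choose j) * peel_count j Y)"
proof (induction n arbitrary: Y)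
  case 0
  have "(\<Sum>j\<le>M. (0 choose j) * peel_count j Y) = (\<Sum>j\<in>{0}. (0 choose j) * peel_count j Y)"
    by (rule sum.mono_neutral_right) auto
  then show ?case
    by (simp add: card_proper_colourings_0)
next
  case (Suc n)
  let ?P = "compatible_pairs Y - {({}, {})}"
  have IH: "card (proper_colourings (Y - fst p - snd p) (insert 0 (band n))) =
      (\<Sum>j\<le>M. (n choose j) * peel_count j (Y - fst p - snd p))" for p
    using Suc.prems by (intro Suc.IH) (auto intro: order.trans[OF card_mono])
  have "card (proper_colourings Y (insert 0 (band (Suc n)))) =
      card (proper_colourings Y (insert 0 (band n))) +
      (\<Sum>p\<in>?P. card (proper_colourings (Y - fst p - snd p) (insert 0 (band n))))"
    using sum.remove[OF finite_compatible_pairs[OF Suc.prems(1)] empty_in_compatible_pairs,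
        of "\<lambda>p. card (proper_colourings (Y - fst p - snd p) (insert 0 (band n)))"]
    by (simp add: card_proper_colourings_Suc[OF Suc.prems(1)])
  also have "\<dots> = (\<Sum>j\<le>M. (n choose j) * peel_count j Y) +
                   (\<Sum>j\<le>M. (n choose j) * peel_count (Suc j) Y)"
    by (simp add: Suc.IH[OF Suc.prems] IH sum_distrib_left sum.swap[of _ ?P])
  also have "(\<Sum>j\<le>M. (n choose j) * peel_count (Suc j) Y) = (\<Sum>j<M. (n choose j) * peel_count (Suc j) Y)"
  proof -
    have "peel_count (Suc M) Y = 0"
      using Suc.prems by (intro peel_count_eq_0) auto
    then show ?thesis
      by (simp add: lessThan_Suc_atMost[symmetric] del: peel_count.simps)
  qed
  finally show ?case
    using sum_Suc_choose[where a="\<lambda>j. peel_count j Y" and M=M and n=n] by simp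
qed

definition colouring_poly :: "'v set \<Rightarrow> 'a::field_char_0 \<Rightarrow> 'a" where
  "colouring_poly Y x = (\<Sum>j\<le>card Y. (x gchoose j) * of_nat (peel_count j Y))"

lemma colouring_poly_eq_sum:
  assumes "finite Y" "card Y \<le> M"
  shows "colouring_poly Y x = (\<Sum>j\<le>M. (x gchoose j) * of_nat (peel_count j Y))"
  unfolding colouring_poly_def
  by (rule sum.mono_neutral_left) (use assms in \<open>auto simp: peel_count_eq_0\<close>)

lemma colouring_poly_of_nat:
  "finite Y \<Longrightarrow> colouring_poly Y (of_nat n) = of_nat (card (proper_colourings Y (insert 0 (band n))))"
  by (simp add: colouring_poly_def card_proper_colourings_band[of Y "card Y"] binomial_gbinomial[symmetric])

lemma colouring_poly_minus_one:
  assumes Y: "finite Y"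
  shows "colouring_poly Y (-1 :: 'a::field_char_0) =
    of_nat (peel_count 0 Y) - (\<Sum>p\<in>compatible_pairs Y - {({}, {})}. colouring_poly (Y - fst p - snd p) (-1 :: 'a))"
proof -
  let ?P = "compatible_pairs Y - {({}, {})}"
  have "colouring_poly Y (-1 :: 'a) = (\<Sum>j\<le>Suc (card Y). (-1) ^ j * of_nat (peel_count j Y))"
    using Y by (simp add: colouring_poly_eq_sum[of Y "Suc (card Y)"] gbinomial_minus_one)
  also have "\<dots> = of_nat (peel_count 0 Y) + (\<Sum>j\<le>card Y. (-1) ^ Suc j * of_nat (peel_count (Suc j) Y))"
    by (simp only: sum.atMost_Suc_shift) simp
  also have "(\<Sum>j\<le>card Y. (-1) ^ Suc j * of_nat (peel_count (Suc j) Y)) =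
      - (\<Sum>p\<in>?P. \<Sum>j\<le>card Y. (-1) ^ j * of_nat (peel_count j (Y - fst p - snd p)) :: 'a)"
    by (simp add: sum_distrib_left sum.swap[of _ ?P] sum_negf)
  also have "(\<Sum>p\<in>?P. \<Sum>j\<le>card Y. (-1) ^ j * of_nat (peel_count j (Y - fst p - snd p))) =
      (\<Sum>p\<in>?P. colouring_poly (Y - fst p - snd p) (-1 :: 'a))"
  proof (rule sum.cong[OF refl])
    fix p assume "p \<in> ?P"
    then have "finite (Y - fst p - snd p)" "card (Y - fst p - snd p) \<le> card Y"
      using Y card_Diff_compatible_pair_less[OF Y, of p] by auto
    then show "(\<Sum>j\<le>card Y. (-1) ^ j * of_nat (peel_count j (Y - fst p - snd p))) =
        colouring_poly (Y - fst p - snd p) (-1 :: 'a)"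
      by (simp add: colouring_poly_eq_sum gbinomial_minus_one)
  qed
  finally show ?thesis
    by simp
qed

lemma card_proper_colourings_palette_fibre:
  assumes "S \<subseteq> V"
  shows "card {\<kappa> \<in> proper_colourings V (palette n). {v\<in>V. \<kappa> v = 1} = S} =
    (if compatible S {} then card (proper_colourings (V - S) (insert 0 (band n))) else 0)"
proof -
  have "\<kappa> \<in> V \<rightarrow>\<^sub>E palette n \<longleftrightarrow> \<kappa> \<in> V \<rightarrow>\<^sub>E insert 1 (insert (-1) (insert 0 (band n))) \<and> {v\<in>V. \<kappa> v = -1} = {}"
    for \<kappa>
    using minus_one_notin_band by (auto simp: palette_def PiE_def Pi_def)
  then have "{\<kappa> \<in> proper_colourings V (palette n). {v\<in>V. \<kappa> v = 1} = S} =
      {\<kappa> \<in> proper_colourings V (insert 1 (insert (-1) (insert 0 (band n)))).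
         {v\<in>V. \<kappa> v = 1} = S \<and> {v\<in>V. \<kappa> v = -1} = {}}"
    by (auto simp: proper_colourings_def)
  then show ?thesis
    using assms card_colour_fibre[of S "{}" V 1 "insert 0 (band n)"]
    by (simp add: colour_fibre_def zero_notin_band one_notin_band minus_one_notin_band)
qed

lemma sum_weighted_proper_colourings:
  "(\<Sum>\<kappa>\<in>proper_colourings V (palette n). \<Prod>v\<in>V. colour_weight t (\<kappa> v)) =
   (\<Sum>S\<in>Pow V. if compatible S {}
      then (t - 1) ^ card S * (-1) ^ card (V - S) * of_nat (card (proper_colourings (V - S) (insert 0 (band n))))
      else 0)"
proof -
  let ?K = "proper_colourings V (palette n)"
  have "(\<Sum>\<kappa>\<in>?K. \<Prod>v\<in>V. colour_weight t (\<kappa> v)) =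
      (\<Sum>S\<in>Pow V. \<Sum>\<kappa>\<in>{\<kappa>\<in>?K. {v\<in>V. \<kappa> v = 1} = S}. \<Prod>v\<in>V. colour_weight t (\<kappa> v))"
    by (rule sum.group[symmetric]) (auto simp: finite_V finite_palette finite_proper_colourings)
  also have "\<dots> = (\<Sum>S\<in>Pow V. of_nat (card {\<kappa>\<in>?K. {v\<in>V. \<kappa> v = 1} = S}) *
                                 ((t - 1) ^ card S * (-1) ^ card (V - S)))"
  proof (rule sum.cong[OF refl])
    fix S assume "S \<in> Pow V"
    then have S: "S \<subseteq> V"
      by simp
    have "(\<Prod>v\<in>V. colour_weight t (\<kappa> v)) = (t - 1) ^ card S * (-1) ^ card (V - S)"
      if "{v\<in>V. \<kappa> v = 1} = S" for \<kappa>
    proof -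
      have "(\<Prod>v\<in>V. colour_weight t (\<kappa> v)) =
          (\<Prod>v\<in>V - S. colour_weight t (\<kappa> v)) * (\<Prod>v\<in>S. colour_weight t (\<kappa> v))"
        by (rule prod.subset_diff[OF S finite_V])
      also have "\<dots> = (\<Prod>v\<in>V - S. -1) * (\<Prod>v\<in>S. t - 1)"
        using that by (intro arg_cong2[where f="(*)"] prod.cong) (auto simp: colour_weight_def)
      finally show ?thesis
        by simp
    qed
    then show "(\<Sum>\<kappa>\<in>{\<kappa>\<in>?K. {v\<in>V. \<kappa> v = 1} = S}. \<Prod>v\<in>V. colour_weight t (\<kappa> v)) =
        of_nat (card {\<kappa>\<in>?K. {v\<in>V. \<kappa> v = 1} = S}) * ((t - 1) ^ card S * (-1) ^ card (V - S))"
      by simp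
  qed
  also have "\<dots> = (\<Sum>S\<in>Pow V. if compatible S {}
      then (t - 1) ^ card S * (-1) ^ card (V - S) * of_nat (card (proper_colourings (V - S) (insert 0 (band n))))
      else 0)"
    by (intro sum.cong refl) (simp add: card_proper_colourings_palette_fibre)
  finally show ?thesis .
qed

end

section \<open>Cycles\<close>

definition sources :: "'v set \<Rightarrow> 'e set \<Rightarrow> ('e \<Rightarrow> 'v \<times> 'v) \<Rightarrow> ('e \<times> bool \<Rightarrow> bool) \<Rightarrow> 'v set" where
  "sources V E ends \<tau> = {v\<in>V. \<forall>e\<in>E. \<forall>s. endpoint ends e s = v \<longrightarrow> \<not> \<tau> (e, s)}"

lemma has_cycleE:
  assumes "has_cycle E ends \<tau>"
  obtains vs es where "es \<noteq> []" "length vs = Suc (length es)" "hd vs = last vs" "set es \<subseteq> E"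
    "\<forall>i<length es. {endpoint ends (es!i) True, endpoint ends (es!i) False} = {vs!i, vs!Suc i}"
    "\<forall>w\<in>set vs. (\<exists>e\<in>set es. \<exists>s. endpoint ends e s = w \<and> \<tau> (e, s)) \<and>
                 (\<exists>e\<in>set es. \<exists>s. endpoint ends e s = w \<and> \<not> \<tau> (e, s))"
  using assms unfolding has_cycle_def by blast

lemma has_cycle_mono:
  assumes "has_cycle E1 ends \<tau>1" "E1 \<subseteq> E2" "\<forall>e\<in>E1. \<forall>s. \<tau>2 (e, s) = \<tau>1 (e, s)"
  shows "has_cycle E2 ends \<tau>2"
proof -
  obtain vs es where w: "es \<noteq> []" "length vs = Suc (length es)" "hd vs = last vs" "set es \<subseteq> E1"
    "\<forall>i<length es. {endpoint ends (es!i) True, endpoint ends (es!i) False} = {vs!i, vs!Suc i}"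
    "\<forall>w\<in>set vs. (\<exists>e\<in>set es. \<exists>s. endpoint ends e s = w \<and> \<tau>1 (e, s)) \<and>
                 (\<exists>e\<in>set es. \<exists>s. endpoint ends e s = w \<and> \<not> \<tau>1 (e, s))"
    using assms(1) by (rule has_cycleE)
  have "\<forall>w\<in>set vs. (\<exists>e\<in>set es. \<exists>s. endpoint ends e s = w \<and> \<tau>2 (e, s)) \<and>
                 (\<exists>e\<in>set es. \<exists>s. endpoint ends e s = w \<and> \<not> \<tau>2 (e, s))"
    using w(4,6) assms(3) by (metis subsetD)
  then show ?thesis
    unfolding has_cycle_def using w(1-5) assms(2) by blast
qed

lemma endpoint_in_walk:
  assumes "length vs = Suc (length es)"
    "\<forall>i<length es. {endpoint ends (es!i) True, endpoint ends (es!i) False} = {vs!i, vs!Suc i}"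
    "e \<in> set es"
  shows "endpoint ends e s \<in> set vs"
proof -
  obtain i where i: "i < length es" "es ! i = e"
    using assms(3) by (metis in_set_conv_nth)
  then have "endpoint ends e s \<in> {vs!i, vs!Suc i}"
    using assms(2) by (cases s) auto
  then show ?thesis
    using i assms(1) by auto
qed

text \<open>\<open>hs k\<close> is the half-edge through which a closed walk enters its \<open>k\<close>-th vertex; the edge
  of \<open>hs (k + 1)\<close> leaves that vertex through its other half-edge, with the opposite arrow.\<close>

lemma has_cycle_of_half_edge_walk:
  fixes hs :: "nat \<Rightarrow> 'e \<times> bool"
  assumes ij: "i < j" "hs i = hs j" and in_E: "\<And>k. fst (hs k) \<in> E"
    and step: "\<And>k. i \<le> k \<Longrightarrow> k < j \<Longrightarrow>
      endpoint ends (fst (hs (Suc k))) (\<not> snd (hs (Suc k))) = endpoint ends (fst (hs k)) (snd (hs k)) \<and>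
      \<tau> (fst (hs (Suc k)), \<not> snd (hs (Suc k))) \<noteq> \<tau> (hs k)"
  shows "has_cycle E ends \<tau>"
proof -
  define ep where "ep h = endpoint ends (fst h) (snd h)" for h :: "'e \<times> bool"
  define vs where "vs = map (\<lambda>k. ep (hs k)) [i..<Suc j]"
  define es where "es = map (\<lambda>k. fst (hs (Suc k))) [i..<j]"
  have len: "length es = j - i" "length vs = Suc (length es)"
    using ij by (simp_all add: vs_def es_def)
  have walk: "\<forall>l<length es. {endpoint ends (es!l) True, endpoint ends (es!l) False} = {vs!l, vs!Suc l}"
  proof (intro allI impI)
    fix l assume l: "l < length es"
    define h where "h = hs (Suc (i + l))"
    have "es ! l = fst h" "vs ! Suc l = ep h" "vs ! l = endpoint ends (fst h) (\<not> snd h)"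
      using l len step[of "i + l"] by (simp_all add: es_def vs_def h_def ep_def del: upt_Suc)
    then show "{endpoint ends (es!l) True, endpoint ends (es!l) False} = {vs!l, vs!Suc l}"
      by (cases "snd h") (auto simp: ep_def)
  qed
  have in_out: "(\<exists>e\<in>set es. \<exists>s. endpoint ends e s = w \<and> \<tau> (e, s)) \<and>
      (\<exists>e\<in>set es. \<exists>s. endpoint ends e s = w \<and> \<not> \<tau> (e, s))" if "w \<in> set vs" for w
  proof -
    obtain k where k: "i \<le> k" "k \<le> j" "w = ep (hs k)"
      using \<open>w \<in> set vs\<close> by (auto simp: vs_def)
    define k1 where "k1 = (if k = i then j else k)"
    define k2 where "k2 = (if k = j then i else k)"
    have k1: "i < k1" "k1 \<le> j" "hs k1 = hs k" and k2: "i \<le> k2" "k2 < j" "hs k2 = hs k"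
      using k ij by (auto simp: k1_def k2_def)
    obtain m where m: "k1 = Suc m"
      using k1(1) by (cases k1) auto
    then have "fst (hs k1) \<in> set es"
      using k1 by (auto simp: es_def intro!: image_eqI[where x=m])
    then have arrive: "\<exists>e\<in>set es. \<exists>s. endpoint ends e s = w \<and> \<tau> (e, s) = \<tau> (hs k)"
      using k1(3) k(3) by (auto simp: ep_def intro!: bexI[where x="fst (hs k)"] exI[where x="snd (hs k)"])
    have "fst (hs (Suc k2)) \<in> set es"
      using k2 by (auto simp: es_def)
    then have leave: "\<exists>e\<in>set es. \<exists>s. endpoint ends e s = w \<and> \<tau> (e, s) \<noteq> \<tau> (hs k)"
      using k2 step[of k2] k(3) by (auto simp: ep_def)
    show ?thesis
      using arrive leave by (cases "\<tau> (hs k)") simp_all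
  qed
  show ?thesis
    unfolding has_cycle_def
  proof (intro exI conjI)
    show "es \<noteq> []" "length vs = Suc (length es)"
      using ij len by (auto simp: es_def)
    show "hd vs = last vs"
      using ij by (simp add: vs_def hd_map last_map)
    show "set es \<subseteq> E"
      using in_E by (auto simp: es_def)
  qed (use walk in_out in auto)
qed

lemma has_cycle_if_in_and_out:
  assumes fin: "finite E" and ne: "E \<noteq> {}"
    and io: "\<forall>e\<in>E. \<forall>s. (\<exists>e'\<in>E. \<exists>s'. endpoint ends e' s' = endpoint ends e s \<and> \<tau> (e', s')) \<and>
                        (\<exists>e'\<in>E. \<exists>s'. endpoint ends e' s' = endpoint ends e s \<and> \<not> \<tau> (e', s'))"
  shows "has_cycle E ends \<tau>"
proof -
  define ep where "ep h = endpoint ends (fst h) (snd h)" for h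
  have "\<exists>d. fst h \<in> E \<longrightarrow> fst d \<in> E \<and> ep d = ep h \<and> \<tau> d \<noteq> \<tau> h" for h
    using io by (cases "\<tau> h") (fastforce simp: ep_def)+
  then have "\<exists>dep. \<forall>h. fst h \<in> E \<longrightarrow> fst (dep h) \<in> E \<and> ep (dep h) = ep h \<and> \<tau> (dep h) \<noteq> \<tau> h"
    by (intro choice allI)
  then obtain dep where dep: "\<And>h. fst h \<in> E \<Longrightarrow> fst (dep h) \<in> E \<and> ep (dep h) = ep h \<and> \<tau> (dep h) \<noteq> \<tau> h"
    by blast
  obtain e0 where e0: "e0 \<in> E"
    using ne by blast
  define hs where "hs k = ((\<lambda>h. (fst (dep h), \<not> snd (dep h))) ^^ k) (e0, True)" for k
  have hs_Suc: "hs (Suc k) = (fst (dep (hs k)), \<not> snd (dep (hs k)))" for k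
    by (simp add: hs_def)
  have in_E: "fst (hs k) \<in> E" for k
    by (induction k) (use e0 dep in \<open>simp_all add: hs_def\<close>)
  have "range hs \<subseteq> E \<times> UNIV"
    using in_E by (simp add: image_subset_iff mem_Times_iff)
  then have "finite (range hs)"
    by (rule finite_subset) (simp add: fin)
  then have "\<not> inj hs"
    using finite_imageD[of hs UNIV] infinite_UNIV_nat by blast
  then obtain a b where ab: "a \<noteq> b" "hs a = hs b"
    unfolding inj_def by blast
  define i where "i = min a b"
  define j where "j = max a b"
  have ij: "i < j" "hs i = hs j"
    using ab by (auto simp: i_def j_def min_def max_def)
  show ?thesis
  proof (rule has_cycle_of_half_edge_walk[OF ij in_E])
    fix k
    show "endpoint ends (fst (hs (Suc k))) (\<not> snd (hs (Suc k))) = endpoint ends (fst (hs k)) (snd (hs k)) \<and>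
      \<tau> (fst (hs (Suc k)), \<not> snd (hs (Suc k))) \<noteq> \<tau> (hs k)"
      using dep[OF in_E[of k]] by (simp add: hs_Suc ep_def)
  qed
qed

section \<open>Acyclic orientations with prescribed sinks and sources\<close>

context signed_graph
begin

definition acyclic_orientations :: "'v set \<Rightarrow> ('e \<times> bool \<Rightarrow> bool) set" where
  "acyclic_orientations Y =
     {\<tau> \<in> orientations (induced_edges Y) sg. acyclic_orientation (induced_edges Y) ends \<tau>}"

definition acyclic_orientations_with :: "'v set \<Rightarrow> 'v set \<Rightarrow> 'v set \<Rightarrow> ('e \<times> bool \<Rightarrow> bool) set" where
  "acyclic_orientations_with Y T U = {\<tau> \<in> acyclic_orientations Y.
     T \<subseteq> sinks Y (induced_edges Y) ends \<tau> \<and> U \<subseteq> sources Y (induced_edges Y) ends \<tau>}"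

lemma finite_acyclic_orientations: "finite (acyclic_orientations Y)"
proof -
  have "acyclic_orientations Y \<subseteq> (induced_edges Y \<times> UNIV) \<rightarrow>\<^sub>E (UNIV :: bool set)"
    by (auto simp: acyclic_orientations_def orientations_def)
  moreover have "finite (induced_edges Y)"
    using finite_E by (simp add: induced_edges_def)
  ultimately show ?thesis
    by (simp add: finite_subset finite_PiE)
qed

lemma card_acyclic_orientations_edgeless:
  assumes "induced_edges Y = {}"
  shows "card (acyclic_orientations Y) = 1"
proof -
  have "orientations (induced_edges Y) sg = {\<lambda>_. undefined}"
    by (auto simp: assms orientations_def PiE_def extensional_def)
  moreover have "\<not> has_cycle {} ends (\<lambda>_. undefined)"
    by (auto simp: has_cycle_def)
  ultimately have "acyclic_orientations Y = {\<lambda>_. undefined}"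
    by (auto simp: acyclic_orientations_def acyclic_orientation_def assms)
  then show ?thesis
    by simp
qed

lemma endpoint_in_induced: "e \<in> induced_edges Y \<Longrightarrow> endpoint ends e s \<in> Y"
  by (cases s) (auto simp: induced_edges_def endpoint_def)

text \<open>A vertex of a cycle has an arrow in and an arrow out, so it is neither a sink nor a
  source.\<close>

lemma has_cycle_avoiding:
  assumes cyc: "has_cycle (induced_edges Y) ends \<tau>"
    and T: "T \<subseteq> sinks Y (induced_edges Y) ends \<tau>" and U: "U \<subseteq> sources Y (induced_edges Y) ends \<tau>"
  shows "has_cycle (induced_edges (Y - T - U)) ends \<tau>"
proof -
  obtain vs es where w: "es \<noteq> []" "length vs = Suc (length es)" "hd vs = last vs"
    "set es \<subseteq> induced_edges Y"
    "\<forall>i<length es. {endpoint ends (es!i) True, endpoint ends (es!i) False} = {vs!i, vs!Suc i}"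
    "\<forall>w\<in>set vs. (\<exists>e\<in>set es. \<exists>s. endpoint ends e s = w \<and> \<tau> (e, s)) \<and>
                 (\<exists>e\<in>set es. \<exists>s. endpoint ends e s = w \<and> \<not> \<tau> (e, s))"
    using cyc by (rule has_cycleE)
  have not_TU: "w \<notin> T \<union> U" if in_vs: "w \<in> set vs" for w
  proof
    assume "w \<in> T \<union> U"
    obtain e1 s1 e2 s2 where "e1 \<in> induced_edges Y" "endpoint ends e1 s1 = w" "\<tau> (e1, s1)"
      "e2 \<in> induced_edges Y" "endpoint ends e2 s2 = w" "\<not> \<tau> (e2, s2)"
      using w(4,6) in_vs by blast
    moreover have "(\<forall>e\<in>induced_edges Y. \<forall>s. endpoint ends e s = w \<longrightarrow> \<tau> (e, s))
        \<or> (\<forall>e\<in>induced_edges Y. \<forall>s. endpoint ends e s = w \<longrightarrow> \<not> \<tau> (e, s))"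
      using \<open>w \<in> T \<union> U\<close> T U by (auto simp: sinks_def sources_def)
    ultimately show False
      by blast
  qed
  have "set es \<subseteq> induced_edges (Y - T - U)"
  proof
    fix e assume e: "e \<in> set es"
    have "endpoint ends e True \<notin> T \<union> U" "endpoint ends e False \<notin> T \<union> U"
      using not_TU endpoint_in_walk[OF w(2) w(5) e] by blast+
    moreover have "e \<in> induced_edges Y"
      using e w(4) by blast
    ultimately show "e \<in> induced_edges (Y - T - U)"
      by (auto simp: induced_edges_def endpoint_def)
  qed
  then show ?thesis
    unfolding has_cycle_def using w(1-3,5,6) by blast
qed

lemma orientation_opposite:
  "\<tau> \<in> orientations E' sg \<Longrightarrow> e \<in> E' \<Longrightarrow> \<tau> (e, s) = (\<tau> (e, \<not> s) \<noteq> sg e)"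
  by (cases s) (auto simp: orientations_def)

lemma arrow_at_sink_or_source:
  assumes T: "T \<subseteq> sinks Y (induced_edges Y) ends \<tau>" and U: "U \<subseteq> sources Y (induced_edges Y) ends \<tau>"
    and TU: "T \<inter> U = {}" and e: "e \<in> induced_edges Y" and s: "endpoint ends e s \<in> T \<union> U"
  shows "\<tau> (e, s) = (endpoint ends e s \<in> T)"
proof (cases "endpoint ends e s \<in> T")
  case True
  then show ?thesis
    using T e by (auto simp: sinks_def)
next
  case False
  then show ?thesis
    using U e s by (auto simp: sources_def)
qed

text \<open>The arrows of an edge with an end in \<open>T \<union> U\<close> are forced: at that end by the sink or
  source condition, at the other end by the sign of the edge.\<close>

definition forced_arrow :: "'v set \<Rightarrow> 'v set \<Rightarrow> 'e \<Rightarrow> bool \<Rightarrow> bool" where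
  "forced_arrow T U e s = (if endpoint ends e s \<in> T \<union> U then endpoint ends e s \<in> T
                           else (endpoint ends e (\<not> s) \<in> T) \<noteq> sg e)"

lemma arrow_eq_forced_arrow:
  assumes \<tau>: "\<tau> \<in> orientations (induced_edges Y) sg"
    and T: "T \<subseteq> sinks Y (induced_edges Y) ends \<tau>" and U: "U \<subseteq> sources Y (induced_edges Y) ends \<tau>"
    and TU: "T \<inter> U = {}" and e: "e \<in> induced_edges Y" "e \<notin> induced_edges (Y - T - U)"
  shows "\<tau> (e, s) = forced_arrow T U e s"
proof (cases "endpoint ends e s \<in> T \<union> U")
  case True
  then show ?thesis
    using arrow_at_sink_or_source[OF T U TU e(1)] by (simp add: forced_arrow_def)
next
  case False
  have "fst (ends e) \<in> T \<union> U \<or> snd (ends e) \<in> T \<union> U"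
    using e by (auto simp: induced_edges_def)
  then have other: "endpoint ends e (\<not> s) \<in> T \<union> U"
    using False by (cases s) (auto simp: endpoint_def)
  have "\<tau> (e, s) = (\<tau> (e, \<not> s) \<noteq> sg e)"
    by (rule orientation_opposite[OF \<tau> e(1)])
  also have "\<tau> (e, \<not> s) = (endpoint ends e (\<not> s) \<in> T)"
    by (rule arrow_at_sink_or_source[OF T U TU e(1) other])
  finally show ?thesis
    using False by (simp add: forced_arrow_def)
qed

lemma acyclic_orientations_with_incompatible:
  assumes "T \<subseteq> Y" "U \<subseteq> Y" "T \<inter> U = {}" "\<not> compatible T U"
  shows "acyclic_orientations_with Y T U = {}"
proof (rule ccontr)
  assume "acyclic_orientations_with Y T U \<noteq> {}"
  then obtain \<tau> where \<tau>: "\<tau> \<in> orientations (induced_edges Y) sg"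
    and T: "T \<subseteq> sinks Y (induced_edges Y) ends \<tau>" and U: "U \<subseteq> sources Y (induced_edges Y) ends \<tau>"
    by (auto simp: acyclic_orientations_with_def acyclic_orientations_def)
  from assms(4) obtain e where e: "e \<in> E" "fst (ends e) \<in> T \<union> U" "snd (ends e) \<in> T \<union> U"
    and bad: "sg e \<noteq> ((fst (ends e) \<in> T) \<noteq> (snd (ends e) \<in> T))"
    by (auto simp: compatible_def)
  have e_Y: "e \<in> induced_edges Y"
    using e assms(1,2) by (auto simp: induced_edges_def)
  have "\<tau> (e, True) = (fst (ends e) \<in> T)" "\<tau> (e, False) = (snd (ends e) \<in> T)"
    using arrow_at_sink_or_source[OF T U assms(3) e_Y] e by (simp_all add: endpoint_def)
  moreover have "(\<tau> (e, True) \<noteq> \<tau> (e, False)) = sg e"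
    using \<tau> e_Y by (auto simp: orientations_def)
  ultimately show False
    using bad by simp
qed

definition extend_orientation ::
  "'v set \<Rightarrow> 'v set \<Rightarrow> 'v set \<Rightarrow> ('e \<times> bool \<Rightarrow> bool) \<Rightarrow> 'e \<times> bool \<Rightarrow> bool" where
  "extend_orientation Y T U \<rho> h =
     (if fst h \<in> induced_edges (Y - T - U) then \<rho> h
      else if fst h \<in> induced_edges Y then forced_arrow T U (fst h) (snd h) else undefined)"

lemma extend_orientation_in_orientations:
  assumes "compatible T U" "\<rho> \<in> orientations (induced_edges (Y - T - U)) sg"
  shows "extend_orientation Y T U \<rho> \<in> orientations (induced_edges Y) sg"
proof -
  have "induced_edges (Y - T - U) \<subseteq> induced_edges Y"
    by (rule induced_edges_mono) blast
  then have "extend_orientation Y T U \<rho> \<in> (induced_edges Y \<times> UNIV) \<rightarrow>\<^sub>E UNIV"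
    by (auto simp: extend_orientation_def PiE_def extensional_def)
  moreover have "(extend_orientation Y T U \<rho> (e, True) \<noteq> extend_orientation Y T U \<rho> (e, False)) = sg e"
    if e: "e \<in> induced_edges Y" for e
  proof (cases "e \<in> induced_edges (Y - T - U)")
    case True
    then show ?thesis
      using assms(2) by (auto simp: extend_orientation_def orientations_def)
  next
    case False
    then have "fst (ends e) \<in> T \<union> U \<or> snd (ends e) \<in> T \<union> U"
      using e by (auto simp: induced_edges_def)
    moreover have "fst (ends e) \<in> T \<union> U \<Longrightarrow> snd (ends e) \<in> T \<union> U \<Longrightarrow>
        sg e \<longleftrightarrow> (fst (ends e) \<in> T) \<noteq> (snd (ends e) \<in> T)"
      using assms(1) e by (auto simp: compatible_def induced_edges_def)
    ultimately show ?thesis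
      using False e by (auto simp: extend_orientation_def forced_arrow_def endpoint_def)
  qed
  ultimately show ?thesis
    by (simp add: orientations_def)
qed

lemma extend_orientation_in_acyclic_orientations_with:
  assumes TU: "T \<subseteq> Y" "U \<subseteq> Y" "T \<inter> U = {}" "compatible T U"
    and \<rho>: "\<rho> \<in> acyclic_orientations (Y - T - U)"
  shows "extend_orientation Y T U \<rho> \<in> acyclic_orientations_with Y T U"
proof -
  let ?\<tau> = "extend_orientation Y T U \<rho>"
  have forced: "?\<tau> (e, s) = (endpoint ends e s \<in> T)"
    if "e \<in> induced_edges Y" "endpoint ends e s \<in> T \<union> U" for e s
  proof -
    have "e \<notin> induced_edges (Y - T - U)"
      using that endpoint_in_induced[of e "Y - T - U" s] by blast
    then show ?thesis
      using that by (simp add: extend_orientation_def forced_arrow_def)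
  qed
  have T: "T \<subseteq> sinks Y (induced_edges Y) ends ?\<tau>"
    using TU(1) forced by (auto simp: sinks_def)
  have U: "U \<subseteq> sources Y (induced_edges Y) ends ?\<tau>"
    using TU(2,3) forced by (auto simp: sources_def)
  have "\<not> has_cycle (induced_edges Y) ends ?\<tau>"
  proof
    assume "has_cycle (induced_edges Y) ends ?\<tau>"
    then have "has_cycle (induced_edges (Y - T - U)) ends ?\<tau>"
      by (rule has_cycle_avoiding[OF _ T U])
    then have "has_cycle (induced_edges (Y - T - U)) ends \<rho>"
      by (rule has_cycle_mono) (auto simp: extend_orientation_def)
    then show False
      using \<rho> by (simp add: acyclic_orientations_def acyclic_orientation_def)
  qed
  then show ?thesis
    using extend_orientation_in_orientations[OF TU(4)] \<rho> T U
    by (simp add: acyclic_orientations_with_def acyclic_orientations_def acyclic_orientation_def)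
qed

lemma restrict_in_acyclic_orientations:
  assumes \<tau>: "\<tau> \<in> acyclic_orientations Y" and "Y' \<subseteq> Y"
  shows "restrict \<tau> (induced_edges Y' \<times> UNIV) \<in> acyclic_orientations Y'"
proof -
  have sub: "induced_edges Y' \<subseteq> induced_edges Y"
    using assms(2) by (rule induced_edges_mono)
  then have "restrict \<tau> (induced_edges Y' \<times> UNIV) \<in> orientations (induced_edges Y') sg"
    using \<tau> by (auto simp: acyclic_orientations_def orientations_def PiE_def Pi_def)
  moreover have "\<not> has_cycle (induced_edges Y') ends (restrict \<tau> (induced_edges Y' \<times> UNIV))"
  proof
    assume "has_cycle (induced_edges Y') ends (restrict \<tau> (induced_edges Y' \<times> UNIV))"
    then have "has_cycle (induced_edges Y) ends \<tau>"
      by (rule has_cycle_mono[OF _ sub]) simp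
    then show False
      using \<tau> by (simp add: acyclic_orientations_def acyclic_orientation_def)
  qed
  ultimately show ?thesis
    by (simp add: acyclic_orientations_def acyclic_orientation_def)
qed

lemma extend_orientation_restrict:
  assumes "\<tau> \<in> acyclic_orientations_with Y T U" "T \<inter> U = {}"
  shows "extend_orientation Y T U (restrict \<tau> (induced_edges (Y - T - U) \<times> UNIV)) = \<tau>"
proof
  fix h :: "'e \<times> bool"
  have \<tau>: "\<tau> \<in> orientations (induced_edges Y) sg"
    and T: "T \<subseteq> sinks Y (induced_edges Y) ends \<tau>" and U: "U \<subseteq> sources Y (induced_edges Y) ends \<tau>"
    using assms(1) by (auto simp: acyclic_orientations_with_def acyclic_orientations_def)
  show "extend_orientation Y T U (restrict \<tau> (induced_edges (Y - T - U) \<times> UNIV)) h = \<tau> h"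
    using \<tau> arrow_eq_forced_arrow[OF \<tau> T U assms(2), of "fst h" "snd h"]
    by (cases h) (auto simp: extend_orientation_def orientations_def PiE_def extensional_def)
qed

lemma card_acyclic_orientations_with:
  assumes TU: "T \<subseteq> Y" "U \<subseteq> Y" "T \<inter> U = {}"
  shows "card (acyclic_orientations_with Y T U) =
    (if compatible T U then card (acyclic_orientations (Y - T - U)) else 0)"
proof (cases "compatible T U")
  case False
  then show ?thesis
    using acyclic_orientations_with_incompatible[OF TU] by simp
next
  case True
  have "bij_betw (\<lambda>\<tau>. restrict \<tau> (induced_edges (Y - T - U) \<times> UNIV))
      (acyclic_orientations_with Y T U) (acyclic_orientations (Y - T - U))"
  proof (rule bij_betw_byWitness[where f'="extend_orientation Y T U"])
    show "\<forall>\<rho>\<in>acyclic_orientations (Y - T - U).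
        restrict (extend_orientation Y T U \<rho>) (induced_edges (Y - T - U) \<times> UNIV) = \<rho>"
      by (auto simp: extend_orientation_def acyclic_orientations_def orientations_def PiE_def
          extensional_def fun_eq_iff)
    show "(\<lambda>\<tau>. restrict \<tau> (induced_edges (Y - T - U) \<times> UNIV)) ` acyclic_orientations_with Y T U \<subseteq>
        acyclic_orientations (Y - T - U)"
      by (auto simp: acyclic_orientations_with_def intro: restrict_in_acyclic_orientations)
    show "extend_orientation Y T U ` acyclic_orientations (Y - T - U) \<subseteq> acyclic_orientations_with Y T U"
      using extend_orientation_in_acyclic_orientations_with[OF TU True] by blast
  qed (use extend_orientation_restrict TU(3) in blast)
  then show ?thesis
    using True by (simp add: bij_betw_same_card)
qed

end

section \<open>Reciprocity\<close>

lemma sum_Pow_neg_one_power_card: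
  "finite X \<Longrightarrow> (\<Sum>U\<in>Pow X. (-1 :: 'a::comm_ring_1) ^ card U) = (if X = {} then 1 else 0)"
  using prod_diff_conv_sum[of X "\<lambda>_. 1 :: 'a" "\<lambda>_. 1"] by (simp add: power_0_left)

lemma sum_disjoint_pairs_neg_one_power:
  assumes A: "finite A" and B: "finite B"
  shows "(\<Sum>p\<in>{p. fst p \<subseteq> A \<and> snd p \<subseteq> B \<and> fst p \<inter> snd p = {}}.
            (-1 :: 'a::comm_ring_1) ^ (card (fst p) + card (snd p))) =
         (if A = B then (-1) ^ card A else 0)"
proof -
  have "{p. fst p \<subseteq> A \<and> snd p \<subseteq> B \<and> fst p \<inter> snd p = {}} = Sigma (Pow A) (\<lambda>T. Pow (B - T))"
    by auto
  then have "(\<Sum>p\<in>{p. fst p \<subseteq> A \<and> snd p \<subseteq> B \<and> fst p \<inter> snd p = {}}.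
                (-1 :: 'a) ^ (card (fst p) + card (snd p))) =
      (\<Sum>T\<in>Pow A. (-1) ^ card T * (\<Sum>U\<in>Pow (B - T). (-1) ^ card U))"
    using A B by (simp add: sum.Sigma split_def power_add sum_distrib_left)
  also have "\<dots> = (\<Sum>T\<in>Pow A. if B \<subseteq> T then (-1) ^ card T else 0)"
    using B by (intro sum.cong refl) (auto simp: sum_Pow_neg_one_power_card)
  also have "\<dots> = (\<Sum>T\<in>{T\<in>Pow A. B \<subseteq> T}. (-1) ^ card T)"
    using A by (intro sum.inter_filter[symmetric]) simp
  also have "\<dots> = (if A = B then (-1) ^ card A else 0)"
  proof (cases "B \<subseteq> A")
    case True
    have "(\<Sum>T\<in>{T\<in>Pow A. B \<subseteq> T}. (-1 :: 'a) ^ card T) = (\<Sum>R\<in>Pow (A - B). (-1) ^ card (B \<union> R))"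
      by (rule sum.reindex_bij_witness[where i="\<lambda>R. B \<union> R" and j="\<lambda>T. T - B"])
         (use True in \<open>auto simp: sup.absorb2\<close>)
    also have "\<dots> = (\<Sum>R\<in>Pow (A - B). (-1) ^ card B * (-1) ^ card R)"
    proof (rule sum.cong[OF refl])
      fix R assume "R \<in> Pow (A - B)"
      then have "card (B \<union> R) = card B + card R"
        using A B by (intro card_Un_disjoint) (auto intro: finite_subset)
      then show "(-1 :: 'a) ^ card (B \<union> R) = (-1) ^ card B * (-1) ^ card R"
        by (simp add: power_add)
    qed
    also have "\<dots> = (if A = B then (-1) ^ card A else 0)"
      using A True by (auto simp: sum_distrib_left[symmetric] sum_Pow_neg_one_power_card)
    finally show ?thesis .
  next
    case False
    then have "{T\<in>Pow A. B \<subseteq> T} = {}" "A \<noteq> B"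
      by auto
    then show ?thesis
      by (simp only: sum.empty if_False)
  qed
  finally show ?thesis .
qed

context signed_graph
begin

lemma sinks_ne_sources:
  assumes \<tau>: "\<tau> \<in> acyclic_orientations Y" and ne: "induced_edges Y \<noteq> {}"
  shows "sinks Y (induced_edges Y) ends \<tau> \<noteq> sources Y (induced_edges Y) ends \<tau>"
proof -
  have "finite (induced_edges Y)"
    using finite_E by (simp add: induced_edges_def)
  moreover have "\<not> has_cycle (induced_edges Y) ends \<tau>"
    using \<tau> by (simp add: acyclic_orientations_def acyclic_orientation_def)
  ultimately obtain e s where e: "e \<in> induced_edges Y" and
    lacks: "\<not> ((\<exists>e'\<in>induced_edges Y. \<exists>s'. endpoint ends e' s' = endpoint ends e s \<and> \<tau> (e', s')) \<and>
               (\<exists>e'\<in>induced_edges Y. \<exists>s'. endpoint ends e' s' = endpoint ends e s \<and> \<not> \<tau> (e', s')))"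
    using has_cycle_if_in_and_out[OF _ ne] by blast
  define w where "w = endpoint ends e s"
  have w: "w \<in> Y"
    unfolding w_def by (rule endpoint_in_induced[OF e])
  show ?thesis
  proof (cases "\<tau> (e, s)")
    case True
    then have "\<forall>e'\<in>induced_edges Y. \<forall>s'. endpoint ends e' s' = w \<longrightarrow> \<tau> (e', s')"
      using lacks e by (auto simp: w_def)
    then have "w \<in> sinks Y (induced_edges Y) ends \<tau>"
      using w by (simp add: sinks_def)
    moreover have "w \<notin> sources Y (induced_edges Y) ends \<tau>"
      using True e by (auto simp: sources_def w_def)
    ultimately show ?thesis
      by blast
  next
    case False
    then have "\<forall>e'\<in>induced_edges Y. \<forall>s'. endpoint ends e' s' = w \<longrightarrow> \<not> \<tau> (e', s')"
      using lacks e by (auto simp: w_def)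
    then have "w \<in> sources Y (induced_edges Y) ends \<tau>"
      using w by (simp add: sources_def)
    moreover have "w \<notin> sinks Y (induced_edges Y) ends \<tau>"
      using False e by (auto simp: sinks_def w_def)
    ultimately show ?thesis
      by blast
  qed
qed

text \<open>An acyclic orientation with an edge has a vertex that is a sink or a source but not
  both, so the alternating sum over disjoint sets of its sinks and sources vanishes.\<close>

lemma sum_compatible_pairs_of_sinks_sources:
  assumes Y: "finite Y" and \<tau>: "\<tau> \<in> acyclic_orientations Y"
  shows "(\<Sum>p\<in>{p\<in>compatible_pairs Y - {({}, {})}. \<tau> \<in> acyclic_orientations_with Y (fst p) (snd p)}.
            (-1 :: rat) ^ (card (fst p) + card (snd p) + 1)) =
         1 - (-1) ^ card Y * (if induced_edges Y = {} then 1 else 0)"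
proof -
  define Sk where "Sk = sinks Y (induced_edges Y) ends \<tau>"
  define So where "So = sources Y (induced_edges Y) ends \<tau>"
  define D where "D = {p. fst p \<subseteq> Sk \<and> snd p \<subseteq> So \<and> fst p \<inter> snd p = {}}"
  have Sk_So: "Sk \<subseteq> Y" "So \<subseteq> Y"
    by (auto simp: Sk_def So_def sinks_def sources_def)
  have fin: "finite Sk" "finite So"
    using Sk_So Y by (auto intro: finite_subset)
  have "finite D"
    unfolding D_def by (rule finite_subset[of _ "Pow Y \<times> Pow Y"]) (use Sk_So Y in auto)
  have "{p\<in>compatible_pairs Y - {({}, {})}. \<tau> \<in> acyclic_orientations_with Y (fst p) (snd p)} =
      D - {({}, {})}"
  proof (intro set_eqI iffI)
    fix p assume "p \<in> D - {({}, {})}"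
    then have p: "fst p \<subseteq> Y" "snd p \<subseteq> Y" "fst p \<inter> snd p = {}"
      and \<tau>_with: "\<tau> \<in> acyclic_orientations_with Y (fst p) (snd p)"
      using Sk_So \<tau> by (auto simp: D_def Sk_def So_def acyclic_orientations_with_def)
    then have "compatible (fst p) (snd p)"
      using acyclic_orientations_with_incompatible by blast
    then show "p \<in> {p\<in>compatible_pairs Y - {({}, {})}. \<tau> \<in> acyclic_orientations_with Y (fst p) (snd p)}"
      using p \<tau>_with \<open>p \<in> D - {({}, {})}\<close> by (simp add: mem_compatible_pairs)
  qed (auto simp: D_def Sk_def So_def acyclic_orientations_with_def mem_compatible_pairs)
  then have "(\<Sum>p\<in>{p\<in>compatible_pairs Y - {({}, {})}. \<tau> \<in> acyclic_orientations_with Y (fst p) (snd p)}.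
        (-1 :: rat) ^ (card (fst p) + card (snd p) + 1)) =
      1 - (\<Sum>p\<in>D. (-1) ^ (card (fst p) + card (snd p)))"
    using fin \<open>finite D\<close> by (simp add: sum_diff1 sum_negf D_def)
  also have "\<dots> = 1 - (if Sk = So then (-1) ^ card Sk else 0)"
    unfolding D_def using fin by (simp add: sum_disjoint_pairs_neg_one_power)
  also have "\<dots> = 1 - (-1) ^ card Y * (if induced_edges Y = {} then 1 else 0)"
  proof (cases "induced_edges Y = {}")
    case True
    then have "Sk = Y" "So = Y"
      by (auto simp: Sk_def So_def sinks_def sources_def)
    then show ?thesis
      using True by simp
  next
    case False
    then show ?thesis
      using sinks_ne_sources[OF \<tau>] by (simp add: Sk_def So_def)
  qed
  finally show ?thesis .
qed

lemma card_acyclic_orientations_rec: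
  assumes Y: "finite Y"
  shows "(of_nat (card (acyclic_orientations Y)) :: rat) =
    (-1) ^ card Y * (if induced_edges Y = {} then 1 else 0) +
    (\<Sum>p\<in>compatible_pairs Y - {({}, {})}.
       (-1) ^ (card (fst p) + card (snd p) + 1) * of_nat (card (acyclic_orientations (Y - fst p - snd p))))"
proof -
  let ?P = "compatible_pairs Y - {({}, {})}"
  define w where "w p = (-1 :: rat) ^ (card (fst p) + card (snd p) + 1)" for p :: "'v set \<times> 'v set"
  define c where "c = (-1 :: rat) ^ card Y * (if induced_edges Y = {} then 1 else 0)"
  have "(\<Sum>p\<in>?P. w p * of_nat (card (acyclic_orientations (Y - fst p - snd p)))) =
      (\<Sum>p\<in>?P. \<Sum>\<tau>\<in>acyclic_orientations Y. if \<tau> \<in> acyclic_orientations_with Y (fst p) (snd p) then w p else 0)"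
  proof (rule sum.cong[OF refl])
    fix p assume "p \<in> ?P"
    then have "card (acyclic_orientations (Y - fst p - snd p)) = card (acyclic_orientations_with Y (fst p) (snd p))"
      by (simp add: card_acyclic_orientations_with mem_compatible_pairs)
    also have "acyclic_orientations_with Y (fst p) (snd p) =
        {\<tau>\<in>acyclic_orientations Y. \<tau> \<in> acyclic_orientations_with Y (fst p) (snd p)}"
      by (auto simp: acyclic_orientations_with_def)
    finally show "w p * of_nat (card (acyclic_orientations (Y - fst p - snd p))) =
        (\<Sum>\<tau>\<in>acyclic_orientations Y. if \<tau> \<in> acyclic_orientations_with Y (fst p) (snd p) then w p else 0)"
      using finite_acyclic_orientations by (simp add: sum.inter_filter[symmetric])
  qed
  also have "\<dots> = (\<Sum>\<tau>\<in>acyclic_orientations Y.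
      \<Sum>p\<in>?P. if \<tau> \<in> acyclic_orientations_with Y (fst p) (snd p) then w p else 0)"
    by (rule sum.swap)
  also have "\<dots> = (\<Sum>\<tau>\<in>acyclic_orientations Y.
      \<Sum>p\<in>{p\<in>?P. \<tau> \<in> acyclic_orientations_with Y (fst p) (snd p)}. w p)"
    using finite_compatible_pairs[OF Y] by (intro sum.cong refl sum.inter_filter[symmetric]) simp
  also have "\<dots> = of_nat (card (acyclic_orientations Y)) * (1 - c)"
    using sum_compatible_pairs_of_sinks_sources[OF Y] by (simp add: w_def c_def)
  finally have rec: "(\<Sum>p\<in>?P. w p * of_nat (card (acyclic_orientations (Y - fst p - snd p)))) =
      of_nat (card (acyclic_orientations Y)) * (1 - c)" .
  have "of_nat (card (acyclic_orientations Y)) = c + of_nat (card (acyclic_orientations Y)) * (1 - c)"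
    by (cases "induced_edges Y = {}") (simp_all add: c_def card_acyclic_orientations_edgeless)
  also have "\<dots> = c + (\<Sum>p\<in>?P. w p * of_nat (card (acyclic_orientations (Y - fst p - snd p))))"
    by (simp only: rec)
  finally show ?thesis
    by (simp only: c_def w_def)
qed

theorem card_acyclic_orientations_eq_colouring_poly:
  "finite Y \<Longrightarrow> of_nat (card (acyclic_orientations Y)) = (-1) ^ card Y * colouring_poly Y (-1 :: rat)"
proof (induction "card Y" arbitrary: Y rule: less_induct)
  case less
  let ?P = "compatible_pairs Y - {({}, {})}"
  have summand: "(-1 :: rat) ^ (card (fst p) + card (snd p) + 1) * of_nat (card (acyclic_orientations (Y - fst p - snd p)))
      = - ((-1) ^ card Y * colouring_poly (Y - fst p - snd p) (-1))" if p: "p \<in> ?P" for p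
  proof -
    have sub: "fst p \<union> snd p \<subseteq> Y" and disj: "fst p \<inter> snd p = {}"
      using p by (auto simp: mem_compatible_pairs)
    have "card (Y - (fst p \<union> snd p)) = card Y - card (fst p \<union> snd p)"
      using sub less.prems by (intro card_Diff_subset) (auto intro: finite_subset)
    moreover have "card (fst p \<union> snd p) \<le> card Y"
      using sub less.prems by (intro card_mono)
    ultimately have "card Y = card (Y - (fst p \<union> snd p)) + card (fst p \<union> snd p)"
      by simp
    also have "card (fst p \<union> snd p) = card (fst p) + card (snd p)"
      using sub disj less.prems by (intro card_Un_disjoint) (auto intro: finite_subset)
    also have "Y - (fst p \<union> snd p) = Y - fst p - snd p"
      by blast
    finally have "card (fst p) + card (snd p) + 1 + card (Y - fst p - snd p) = Suc (card Y)"
      by simp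
    then have sign: "(-1 :: rat) ^ (card (fst p) + card (snd p) + 1) * (-1) ^ card (Y - fst p - snd p) =
        - ((-1) ^ card Y)"
      by (simp only: power_add[symmetric]) simp
    have "of_nat (card (acyclic_orientations (Y - fst p - snd p))) =
        (-1) ^ card (Y - fst p - snd p) * colouring_poly (Y - fst p - snd p) (-1 :: rat)"
      using less.hyps[OF card_Diff_compatible_pair_less[OF less.prems p]] less.prems by simp
    then show ?thesis
      using sign by (simp add: mult.assoc[symmetric])
  qed
  have "(of_nat (card (acyclic_orientations Y)) :: rat) =
      (-1) ^ card Y * (if induced_edges Y = {} then 1 else 0) - (\<Sum>p\<in>?P. (-1) ^ card Y * colouring_poly (Y - fst p - snd p) (-1))"
    using card_acyclic_orientations_rec[OF less.prems] summand by (simp add: sum_negf)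
  also have "\<dots> = (-1) ^ card Y * (of_nat (peel_count 0 Y) - (\<Sum>p\<in>?P. colouring_poly (Y - fst p - snd p) (-1)))"
    by (simp add: sum_distrib_left right_diff_distrib)
  also have "\<dots> = (-1) ^ card Y * colouring_poly Y (-1 :: rat)"
    by (simp only: colouring_poly_minus_one[OF less.prems])
  finally show ?case .
qed

lemma sum_power_card_sinks:
  "(\<Sum>\<tau>\<in>acyclic_orientations V. (t :: rat) ^ card (sinks V E ends \<tau>)) =
   (\<Sum>S\<in>Pow V. if compatible S {} then (t - 1) ^ card S * of_nat (card (acyclic_orientations (V - S))) else 0)"
proof -
  have sinks_V: "sinks V E ends \<tau> \<subseteq> V" for \<tau>
    by (auto simp: sinks_def)
  have "t ^ card (sinks V E ends \<tau>) = (\<Sum>S\<in>Pow V. if S \<subseteq> sinks V E ends \<tau> then (t - 1) ^ card S else 0)" for \<tau>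
  proof -
    have "t ^ card (sinks V E ends \<tau>) = (\<Prod>x\<in>sinks V E ends \<tau>. (t - 1) + 1)"
      by simp
    also have "\<dots> = (\<Sum>S\<in>Pow (sinks V E ends \<tau>). (t - 1) ^ card S)"
      using finite_subset[OF sinks_V finite_V] by (subst prod_add) simp_all
    also have "\<dots> = (\<Sum>S\<in>{S\<in>Pow V. S \<subseteq> sinks V E ends \<tau>}. (t - 1) ^ card S)"
      using sinks_V by (intro sum.cong) auto
    also have "\<dots> = (\<Sum>S\<in>Pow V. if S \<subseteq> sinks V E ends \<tau> then (t - 1) ^ card S else 0)"
      using finite_V by (intro sum.inter_filter) simp
    finally show ?thesis .
  qed
  then have "(\<Sum>\<tau>\<in>acyclic_orientations V. t ^ card (sinks V E ends \<tau>)) =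
      (\<Sum>S\<in>Pow V. \<Sum>\<tau>\<in>acyclic_orientations V. if S \<subseteq> sinks V E ends \<tau> then (t - 1) ^ card S else 0)"
    by (simp add: sum.swap[of _ "acyclic_orientations V"])
  also have "\<dots> = (\<Sum>S\<in>Pow V. (t - 1) ^ card S *
      of_nat (card {\<tau>\<in>acyclic_orientations V. S \<subseteq> sinks V E ends \<tau>}))"
    using finite_acyclic_orientations
    by (intro sum.cong refl) (simp add: sum.inter_filter[symmetric] mult.commute)
  also have "\<dots> = (\<Sum>S\<in>Pow V. if compatible S {} then (t - 1) ^ card S * of_nat (card (acyclic_orientations (V - S))) else 0)"
  proof (rule sum.cong[OF refl])
    fix S assume "S \<in> Pow V"
    then have "card {\<tau>\<in>acyclic_orientations V. S \<subseteq> sinks V E ends \<tau>} =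
        (if compatible S {} then card (acyclic_orientations (V - S)) else 0)"
      using card_acyclic_orientations_with[of S V "{}"]
      by (simp add: acyclic_orientations_with_def induced_edges_V)
    then show "(t - 1) ^ card S * of_nat (card {\<tau>\<in>acyclic_orientations V. S \<subseteq> sinks V E ends \<tau>}) =
        (if compatible S {} then (t - 1) ^ card S * of_nat (card (acyclic_orientations (V - S))) else 0)"
      by simp
  qed
  finally show ?thesis .
qed

end

section \<open>Polynomial functions\<close>

definition polyfun :: "('a::comm_semiring_0 \<Rightarrow> 'a) \<Rightarrow> bool" where
  "polyfun f \<longleftrightarrow> (\<exists>p. f = poly p)"

lemma polyfun_const: "polyfun (\<lambda>x. c)"
  unfolding polyfun_def by (rule exI[of _ "[:c:]"]) (simp add: fun_eq_iff)

lemma polyfun_linear: "polyfun (\<lambda>x. a + x * b)"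
  unfolding polyfun_def by (rule exI[of _ "[:a, b:]"]) (simp add: fun_eq_iff)

lemma polyfun_add:
  assumes "polyfun f" "polyfun g"
  shows "polyfun (\<lambda>x. f x + g x)"
proof -
  obtain p q where "f = poly p" "g = poly q"
    using assms by (auto simp: polyfun_def)
  then show ?thesis
    unfolding polyfun_def by (intro exI[of _ "p + q"]) (simp add: fun_eq_iff)
qed

lemma polyfun_mult:
  fixes f g :: "'a::comm_semiring_1 \<Rightarrow> 'a"
  assumes "polyfun f" "polyfun g"
  shows "polyfun (\<lambda>x. f x * g x)"
proof -
  obtain p q where "f = poly p" "g = poly q"
    using assms by (auto simp: polyfun_def)
  then show ?thesis
    unfolding polyfun_def by (intro exI[of _ "p * q"]) (simp add: fun_eq_iff)
qed

lemma polyfun_sum: "(\<And>a. a \<in> A \<Longrightarrow> polyfun (f a)) \<Longrightarrow> polyfun (\<lambda>x. \<Sum>a\<in>A. f a x)"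
  by (induction A rule: infinite_finite_induct) (simp_all add: polyfun_const polyfun_add)

lemma polyfun_prod: "(\<And>a. a \<in> A \<Longrightarrow> polyfun (f a)) \<Longrightarrow> polyfun (\<lambda>x. \<Prod>a\<in>A. f a x)"
  for f :: "'b \<Rightarrow> 'a::comm_semiring_1 \<Rightarrow> 'a"
  by (induction A rule: infinite_finite_induct) (simp_all add: polyfun_const polyfun_mult)

lemma polyfun_power: "polyfun f \<Longrightarrow> polyfun (\<lambda>x. f x ^ n)"
  for f :: "'a::comm_semiring_1 \<Rightarrow> 'a"
  by (induction n) (simp_all add: polyfun_const polyfun_mult)

lemma polyfun_gbinomial: "polyfun (\<lambda>x :: 'a::field_char_0. x gchoose j)"
proof -
  have "polyfun (\<lambda>x :: 'a. \<Prod>i = 0..<j. (x - of_nat i) / of_nat (j - i))"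
  proof (rule polyfun_prod)
    fix i
    have "(\<lambda>x :: 'a. (x - of_nat i) / of_nat (j - i)) = (\<lambda>x. - of_nat i / of_nat (j - i) + x * (1 / of_nat (j - i)))"
      by (simp add: fun_eq_iff diff_divide_distrib)
    then show "polyfun (\<lambda>x :: 'a. (x - of_nat i) / of_nat (j - i))"
      by (simp only: polyfun_linear)
  qed
  then show ?thesis
    by (simp add: gbinomial_altdef_of_nat)
qed

lemma polyfun_eqI_of_nat:
  fixes f g :: "'a::{idom, ring_char_0} \<Rightarrow> 'a"
  assumes "polyfun f" "polyfun g" "\<And>n. f (of_nat n) = g (of_nat n)"
  shows "f = g"
proof -
  obtain p q where p: "f = poly p" and q: "g = poly q"
    using assms(1,2) by (auto simp: polyfun_def)
  have "range (of_nat :: nat \<Rightarrow> 'a) \<subseteq> {x. poly (p - q) x = 0}"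
    using assms(3) p q by auto
  moreover have "infinite (range (of_nat :: nat \<Rightarrow> 'a))"
    by (rule range_inj_infinite) (simp add: inj_on_def)
  ultimately have "infinite {x. poly (p - q) x = 0}"
    using finite_subset by blast
  then have "p - q = 0"
    using poly_roots_finite by blast
  then show ?thesis
    using p q by simp
qed

lemma sum_coeff_eq_if_poly_eq:
  fixes c :: "'a \<Rightarrow> 'c::{idom, ring_char_0}" and c' :: "'b \<Rightarrow> 'c"
  assumes "finite A" "finite B" "\<And>t. (\<Sum>a\<in>A. c a * t ^ d a) = (\<Sum>b\<in>B. c' b * t ^ d' b)"
  shows "(\<Sum>a\<in>{a\<in>A. d a = k}. c a) = (\<Sum>b\<in>{b\<in>B. d' b = k}. c' b)"
proof -
  define p where "p = (\<Sum>a\<in>A. monom (c a) (d a))"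
  define q where "q = (\<Sum>b\<in>B. monom (c' b) (d' b))"
  have "poly p = poly q"
    using assms by (simp add: fun_eq_iff p_def q_def poly_sum poly_monom)
  then have "coeff p k = coeff q k"
    by (simp add: poly_eq_poly_eq_iff)
  then show ?thesis
    using assms(1,2) by (simp add: p_def q_def coeff_sum coeff_monom sum.inter_filter)
qed

section \<open>Comparing coefficients\<close>

lemma polyfun_gen_value: "polyfun (gen_value t g)"
proof (cases g)
  case (Xi j)
  then have "gen_value t g = (\<lambda>x. (t ^ j - 2) + x * (-2))"
    by (auto simp: fun_eq_iff)
  then show ?thesis
    by (simp only: polyfun_linear)
next
  case (Q a b)
  then have "gen_value t g = (\<lambda>x. -1 + x * (-2))"
    by (auto simp: fun_eq_iff)
  then show ?thesis
    by (simp only: polyfun_linear)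
next
  case Z
  then have "gen_value t g = (\<lambda>x. 1)"
    by (auto simp: fun_eq_iff)
  then show ?thesis
    by (simp only: polyfun_const)
qed

lemma gen_value_minus_one: "gen_value t g (-1) = t ^ xi_index g"
  by (cases g) auto

context signed_graph
begin

lemma polyfun_colouring_poly: "polyfun (colouring_poly Y)"
  unfolding colouring_poly_def by (intro polyfun_sum polyfun_mult polyfun_gbinomial polyfun_const)

lemma sum_xi_deg_power_eq_sum_sinks_power:
  assumes valid: "\<forall>\<mu>\<in>Poly_Mapping.keys P. \<forall>g\<in>Poly_Mapping.keys \<mu>. valid_gen g"
    and P: "poly_eval P = chromB V E ends sg"
  shows "(\<Sum>\<mu>\<in>Poly_Mapping.keys P. Poly_Mapping.lookup P \<mu> * t ^ xi_deg \<mu>) =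
    (\<Sum>\<tau>\<in>acyclic_orientations V. t ^ card (sinks V E ends \<tau>))"
proof -
  define L where "L x = (\<Sum>\<mu>\<in>Poly_Mapping.keys P. Poly_Mapping.lookup P \<mu> *
      (\<Prod>g\<in>Poly_Mapping.keys \<mu>. gen_value t g x ^ Poly_Mapping.lookup \<mu> g))" for x
  define R where "R x = (\<Sum>S\<in>Pow V. if compatible S {}
      then (t - 1) ^ card S * (-1) ^ card (V - S) * colouring_poly (V - S) x else 0)" for x
  have "L (of_nat n) = R (of_nat n)" for n
  proof -
    have "L (of_nat n) = specialize (palette n) (colour_weight t) (chromB V E ends sg)"
      using specialize_poly_eval[OF valid] by (simp add: L_def P)
    also have "\<dots> = (\<Sum>\<kappa>\<in>proper_colourings V (palette n). \<Prod>v\<in>V. colour_weight t (\<kappa> v))"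
      by (simp add: specialize_chromB finite_V finite_palette proper_colourings_def induced_edges_V)
    also have "\<dots> = R (of_nat n)"
      unfolding sum_weighted_proper_colourings R_def
      using finite_V by (intro sum.cong refl) (simp add: colouring_poly_of_nat)
    finally show ?thesis .
  qed
  moreover have "polyfun L"
    unfolding L_def by (intro polyfun_sum polyfun_mult polyfun_const polyfun_prod polyfun_power polyfun_gen_value)
  moreover have "polyfun (\<lambda>x. if compatible S {}
      then (t - 1) ^ card S * (-1) ^ card (V - S) * colouring_poly (V - S) x else 0)" for S
    by (cases "compatible S {}") (simp_all add: polyfun_mult polyfun_const polyfun_colouring_poly)
  then have "polyfun R"
    unfolding R_def by (rule polyfun_sum)
  ultimately have "L (-1) = R (-1)"
    by (metis polyfun_eqI_of_nat)
  moreover have "L (-1) = (\<Sum>\<mu>\<in>Poly_Mapping.keys P. Poly_Mapping.lookup P \<mu> * t ^ xi_deg \<mu>)"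
    using valid by (auto simp: L_def xi_deg_def gen_value_minus_one power_mult power_sum intro!: sum.cong)
  moreover have "R (-1) = (\<Sum>\<tau>\<in>acyclic_orientations V. t ^ card (sinks V E ends \<tau>))"
    using finite_V
    by (auto simp: R_def sum_power_card_sinks card_acyclic_orientations_eq_colouring_poly intro!: sum.cong)
  ultimately show ?thesis
    by simp
qed

end

theorem theorem3p4:
  fixes V :: "'v set" and E :: "'e set" and ends :: "'e \<Rightarrow> 'v \<times> 'v" and sg :: "'e \<Rightarrow> bool"
    and P :: "(gen \<Rightarrow>\<^sub>0 nat) \<Rightarrow>\<^sub>0 rat" and k :: nat
  assumes "finite V" and "finite E"
    and "\<forall>e\<in>E. fst (ends e) \<in> V \<and> snd (ends e) \<in> V"
    and "\<forall>\<mu>\<in>Poly_Mapping.keys P. \<forall>g\<in>Poly_Mapping.keys \<mu>. valid_gen g"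
    and "poly_eval P = chromB V E ends sg"
  shows "of_nat (card {\<tau> \<in> orientations E sg.
             acyclic_orientation E ends \<tau> \<and> card (sinks V E ends \<tau>) = k})
         = (\<Sum>\<mu> \<in> {\<mu> \<in> Poly_Mapping.keys P. xi_deg \<mu> = k}. Poly_Mapping.lookup P \<mu>)"
proof -
  interpret signed_graph V E ends sg
    using assms(1-3) by unfold_locales
  have "(\<Sum>\<mu>\<in>{\<mu>\<in>Poly_Mapping.keys P. xi_deg \<mu> = k}. Poly_Mapping.lookup P \<mu>) =
      (\<Sum>\<tau>\<in>{\<tau>\<in>acyclic_orientations V. card (sinks V E ends \<tau>) = k}. 1)"
    using sum_xi_deg_power_eq_sum_sinks_power[OF assms(4,5)] finite_acyclic_orientations
    by (intro sum_coeff_eq_if_poly_eq) auto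
  moreover have "{\<tau>\<in>acyclic_orientations V. card (sinks V E ends \<tau>) = k} =
      {\<tau> \<in> orientations E sg. acyclic_orientation E ends \<tau> \<and> card (sinks V E ends \<tau>) = k}"
    by (auto simp: acyclic_orientations_def induced_edges_V)
  ultimately show ?thesis
    by simp
qed

end
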